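(* Let $r\ge2$, $1\le d<r$ and $M\in\mathrm{rep}(K_r)$. (1) $M\in\mathrm{rep}_{\mathrm{proj}}(K_r,d)$ if and only if $\mathrm{Hom}_{K_r}(C(\mathfrak w),\sigma_{K_r}(M))=(0)$ for all $\mathfrak w\in\mathrm{Gr}_{r-d}(A_r)$. (2) $M\in\mathrm{rep}_{\mathrm{proj}}(K_r,r-1)$ if and only if $\sigma_{K_r}(M)\in\mathrm{EKP}(K_r)$. (3) $\sigma_{K_r}^{-1}(\mathrm{rep}_{\mathrm{proj}}(K_r,d))\subseteq\mathrm{rep}_{\mathrm{proj}}(K_r,r-1)$. In particular, $\mathrm{rep}_{\mathrm{proj}}(K_r,d)$ is stable under $\sigma_{K_r}^{-1}$.
   Context: $k$ is algebraically closed of arbitrary characteristic; vector spaces finite-dimensional. $K_r$ is the Kronecker quiver with arrows $\gamma_1,\dots,\gamma_r:1\to2$; $A_r=\bigoplus_ik\gamma_i$; for $M=(M_1,M_2,(M(\gamma_i))_i)\in\mathrm{rep}(K_r)$, $\psi_M:A_r\otimes_kM_1\to M_2$, $\gamma_i\otimes m\mapsto M(\gamma_i)(m)$, and $\psi_{M,\mathfrak v}$ is its restriction to $\mathfrak v\otimes_kM_1$. For $e\in\{1,\dots,r\}$, $\mathrm{rep}_{\mathrm{proj}}(K_r,e)$ is the full subcategory of those $M$ with $\psi_{M,\mathfrak v}$ injective for all $\mathfrak v\in\mathrm{Gr}_e(A_r)$ (the Grassmannian of $e$-dimensional subspaces); $\mathrm{EKP}(K_r)=\mathrm{rep}_{\mathrm{proj}}(K_r,1)$.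 For $\mathfrak w\in\mathrm{Gr}_{r-d}(A_r)$, $C(\mathfrak w)=(k,A_r/\mathfrak w)$ with $C(\mathfrak w)(\gamma_i)(\lambda)=\lambda\gamma_i+\mathfrak w$. The shift functor $\sigma_{K_r}$: identify $\psi_M$ with $M_1^r\to M_2$, $(m_i)\mapsto\sum_iM(\gamma_i)(m_i)$; then $\sigma_{K_r}(M)=(\ker\psi_M,M_1)$ with $\sigma_{K_r}(M)(\gamma_i)$ the restriction to $\ker\psi_M$ of the $i$-th projection $M_1^r\to M_1$ (on morphisms $f$: componentwise $f_1$ on $\ker\psi_M$ and $f_1$). Dually $\sigma_{K_r}^{-1}(M)=(M_2,\mathrm{coker}\,\varphi)$ where $\varphi:M_1\to M_2^r$, $m\mapsto(M(\gamma_i)(m))_i$, and $\sigma_{K_r}^{-1}(M)(\gamma_i)$ is the $i$-th inclusion $M_2\to M_2^r$ followed by the projection onto $\mathrm{coker}\,\varphi$. (These are the BGP reflection functors composed with the identification of $K_r$ with its opposite quiver.) *)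

theory Defs
  imports "HOL-Computational_Algebra.Polynomial"
begin

definition alg_closed :: "'k::field itself \<Rightarrow> bool" where
  "alg_closed _ \<longleftrightarrow> (\<forall>p::'k poly. degree p > 0 \<longrightarrow> (\<exists>x. poly p x = 0))"

section \<open>Vector spaces over a field k (explicit structures, so that quotients are available)\<close>

record ('k, 'v) vspace =
  vcarrier :: "'v set"
  vzero :: 'v
  vadd :: "'v \<Rightarrow> 'v \<Rightarrow> 'v"
  vsmult :: "'k \<Rightarrow> 'v \<Rightarrow> 'v"

inductive_set vspan :: "('k, 'v, 'z) vspace_scheme \<Rightarrow> 'v set \<Rightarrow> 'v set"
  for V :: "('k, 'v, 'z) vspace_scheme" and S :: "'v set" where
  span_zero: "vzero V \<in> vspan V S"
| span_gen: "x \<in> S \<Longrightarrow> x \<in> vspan V S"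
| span_add: "x \<in> vspan V S \<Longrightarrow> y \<in> vspan V S \<Longrightarrow> vadd V x y \<in> vspan V S"
| span_smult: "x \<in> vspan V S \<Longrightarrow> vsmult V a x \<in> vspan V S"

definition fd_vs :: "('k::field, 'v) vspace \<Rightarrow> bool" where
  "fd_vs V \<longleftrightarrow>
     vzero V \<in> vcarrier V \<and>
     (\<forall>x\<in>vcarrier V. \<forall>y\<in>vcarrier V. vadd V x y \<in> vcarrier V) \<and>
     (\<forall>a. \<forall>x\<in>vcarrier V. vsmult V a x \<in> vcarrier V) \<and>
     (\<forall>x\<in>vcarrier V. \<forall>y\<in>vcarrier V. \<forall>z\<in>vcarrier V.
        vadd V (vadd V x y) z = vadd V x (vadd V y z)) \<and>
     (\<forall>x\<in>vcarrier V. \<forall>y\<in>vcarrier V. vadd V x y = vadd V y x) \<and>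
     (\<forall>x\<in>vcarrier V. vadd V (vzero V) x = x) \<and>
     (\<forall>x\<in>vcarrier V. \<exists>y\<in>vcarrier V. vadd V x y = vzero V) \<and>
     (\<forall>x\<in>vcarrier V. vsmult V 1 x = x) \<and>
     (\<forall>a b. \<forall>x\<in>vcarrier V. vsmult V a (vsmult V b x) = vsmult V (a * b) x) \<and>
     (\<forall>a b. \<forall>x\<in>vcarrier V. vsmult V (a + b) x = vadd V (vsmult V a x) (vsmult V b x)) \<and>
     (\<forall>a. \<forall>x\<in>vcarrier V. \<forall>y\<in>vcarrier V.
        vsmult V a (vadd V x y) = vadd V (vsmult V a x) (vsmult V a y)) \<and>
     (\<exists>B. finite B \<and> B \<subseteq> vcarrier V \<and> vspan V B = vcarrier V)"

definition subspace_of :: "('k, 'v) vspace \<Rightarrow> 'v set \<Rightarrow> bool" where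
  "subspace_of V U \<longleftrightarrow> U \<subseteq> vcarrier V \<and> vzero V \<in> U \<and>
     (\<forall>x\<in>U. \<forall>y\<in>U. vadd V x y \<in> U) \<and> (\<forall>a. \<forall>x\<in>U. vsmult V a x \<in> U)"

definition lin_indep :: "('k, 'v) vspace \<Rightarrow> 'v set \<Rightarrow> bool" where
  "lin_indep V B \<longleftrightarrow> (\<forall>b\<in>B. b \<notin> vspan V (B - {b}))"

definition Gr :: "('k, 'v) vspace \<Rightarrow> nat \<Rightarrow> 'v set set" where
  "Gr V e = {U. subspace_of V U \<and>
      (\<exists>B. finite B \<and> card B = e \<and> B \<subseteq> U \<and> lin_indep V B \<and> vspan V B = U)}"

definition lin_map :: "('k, 'v) vspace \<Rightarrow> ('k, 'w) vspace \<Rightarrow> ('v \<Rightarrow> 'w) \<Rightarrow> bool" where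
  "lin_map V W f \<longleftrightarrow> (\<forall>x\<in>vcarrier V. f x \<in> vcarrier W) \<and>
     (\<forall>x\<in>vcarrier V. \<forall>y\<in>vcarrier V. f (vadd V x y) = vadd W (f x) (f y)) \<and>
     (\<forall>a. \<forall>x\<in>vcarrier V. f (vsmult V a x) = vsmult W a (f x))"

fun vsum :: "('k, 'w) vspace \<Rightarrow> (nat \<Rightarrow> 'w) \<Rightarrow> nat \<Rightarrow> 'w" where
  "vsum W f 0 = vzero W"
| "vsum W f (Suc n) = vadd W (vsum W f n) (f n)"

definition kline :: "('k::field, 'k) vspace" where
  "kline = \<lparr>vcarrier = UNIV, vzero = 0, vadd = (+), vsmult = (*)\<rparr>"

definition vpow :: "nat \<Rightarrow> ('k, 'v) vspace \<Rightarrow> ('k, nat \<Rightarrow> 'v) vspace" where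
  "vpow r V = \<lparr>vcarrier = {t. (\<forall>i<r. t i \<in> vcarrier V) \<and> (\<forall>i\<ge>r. t i = vzero V)},
     vzero = (\<lambda>_. vzero V),
     vadd = (\<lambda>s t i. vadd V (s i) (t i)),
     vsmult = (\<lambda>a t i. vsmult V a (t i))\<rparr>"

text \<open>A_r = k gamma_1 + ... + k gamma_r, identified with k^r (gamma_{i+1} = i-th unit vector).\<close>
definition Ar :: "nat \<Rightarrow> ('k::field, nat \<Rightarrow> 'k) vspace" where
  "Ar r = vpow r kline"

definition unitv :: "nat \<Rightarrow> nat \<Rightarrow> 'k::zero_neq_one" where
  "unitv i = (\<lambda>j. if j = i then 1 else 0)"

definition coset :: "('k, 'v) vspace \<Rightarrow> 'v set \<Rightarrow> 'v \<Rightarrow> 'v set" where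
  "coset V U x = {vadd V x u | u. u \<in> U}"

definition quot :: "('k, 'v) vspace \<Rightarrow> 'v set \<Rightarrow> ('k, 'v set) vspace" where
  "quot V U = \<lparr>vcarrier = coset V U ` vcarrier V,
     vzero = coset V U (vzero V),
     vadd = (\<lambda>X Y. coset V U (vadd V (SOME x. x \<in> X) (SOME y. y \<in> Y))),
     vsmult = (\<lambda>a X. coset V U (vsmult V a (SOME x. x \<in> X)))\<rparr>"

text \<open>Arrow gamma_{i+1} is indexed by i < r.\<close>
record ('k, 'v, 'w) krep =
  rep1 :: "('k, 'v) vspace"
  rep2 :: "('k, 'w) vspace"
  rmap :: "nat \<Rightarrow> 'v \<Rightarrow> 'w"

definition is_rep :: "nat \<Rightarrow> ('k::field, 'v, 'w) krep \<Rightarrow> bool" where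
  "is_rep r M \<longleftrightarrow> fd_vs (rep1 M) \<and> fd_vs (rep2 M) \<and>
     (\<forall>i<r. lin_map (rep1 M) (rep2 M) (rmap M i))"

text \<open>psi_M : A_r (x) M_1 = M_1^r \<rightarrow> M_2.\<close>
definition psi :: "nat \<Rightarrow> ('k, 'v, 'w) krep \<Rightarrow> (nat \<Rightarrow> 'v) \<Rightarrow> 'w" where
  "psi r M t = vsum (rep2 M) (\<lambda>i. rmap M i (t i)) r"

text \<open>The subspace v (x) M_1 of A_r (x) M_1 = M_1^r: span of the pure tensors a (x) m.\<close>
definition tens :: "nat \<Rightarrow> (nat \<Rightarrow> 'k) set \<Rightarrow> ('k, 'v, 'w) krep \<Rightarrow> (nat \<Rightarrow> 'v) set" where
  "tens r U M = vspan (vpow r (rep1 M))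
     {(\<lambda>i. vsmult (rep1 M) (a i) m) | a m. a \<in> U \<and> m \<in> vcarrier (rep1 M)}"

definition rep_proj :: "nat \<Rightarrow> nat \<Rightarrow> ('k::field, 'v, 'w) krep \<Rightarrow> bool" where
  "rep_proj r e M \<longleftrightarrow> (\<forall>U\<in>Gr (Ar r) e. \<forall>t\<in>tens r U M.
      psi r M t = vzero (rep2 M) \<longrightarrow> t = vzero (vpow r (rep1 M)))"

definition EKP :: "nat \<Rightarrow> ('k::field, 'v, 'w) krep \<Rightarrow> bool" where
  "EKP r M \<longleftrightarrow> rep_proj r 1 M"

definition is_mor :: "nat \<Rightarrow> ('k, 'v1, 'w1) krep \<Rightarrow> ('k, 'v2, 'w2) krep
    \<Rightarrow> ('v1 \<Rightarrow> 'v2) \<Rightarrow> ('w1 \<Rightarrow> 'w2) \<Rightarrow> bool" where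
  "is_mor r N M f1 f2 \<longleftrightarrow> lin_map (rep1 N) (rep1 M) f1 \<and> lin_map (rep2 N) (rep2 M) f2 \<and>
     (\<forall>i<r. \<forall>x\<in>vcarrier (rep1 N). f2 (rmap N i x) = rmap M i (f1 x))"

definition hom_zero :: "nat \<Rightarrow> ('k, 'v1, 'w1) krep \<Rightarrow> ('k, 'v2, 'w2) krep \<Rightarrow> bool" where
  "hom_zero r N M \<longleftrightarrow> (\<forall>f1 f2. is_mor r N M f1 f2 \<longrightarrow>
     (\<forall>x\<in>vcarrier (rep1 N). f1 x = vzero (rep1 M)) \<and>
     (\<forall>y\<in>vcarrier (rep2 N). f2 y = vzero (rep2 M)))"

definition Cw :: "nat \<Rightarrow> (nat \<Rightarrow> 'k::field) set \<Rightarrow> ('k, 'k, (nat \<Rightarrow> 'k) set) krep" where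
  "Cw r W = \<lparr>rep1 = kline, rep2 = quot (Ar r) W,
     rmap = (\<lambda>i c. coset (Ar r) W (vsmult (Ar r) c (unitv i)))\<rparr>"

definition sigma :: "nat \<Rightarrow> ('k, 'v, 'w) krep \<Rightarrow> ('k, nat \<Rightarrow> 'v, 'v) krep" where
  "sigma r M = \<lparr>rep1 = (vpow r (rep1 M))\<lparr>vcarrier :=
                   {t \<in> vcarrier (vpow r (rep1 M)). psi r M t = vzero (rep2 M)}\<rparr>,
                rep2 = rep1 M,
                rmap = (\<lambda>i t. t i)\<rparr>"

definition phi :: "nat \<Rightarrow> ('k, 'v, 'w) krep \<Rightarrow> 'v \<Rightarrow> nat \<Rightarrow> 'w" where
  "phi r M m = (\<lambda>i. if i < r then rmap M i m else vzero (rep2 M))"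

definition incl :: "('k, 'w) vspace \<Rightarrow> nat \<Rightarrow> 'w \<Rightarrow> nat \<Rightarrow> 'w" where
  "incl W i y = (\<lambda>j. if j = i then y else vzero W)"

definition sigma_inv :: "nat \<Rightarrow> ('k, 'v, 'w) krep \<Rightarrow> ('k, 'w, (nat \<Rightarrow> 'w) set) krep" where
  "sigma_inv r M = \<lparr>rep1 = rep2 M,
     rep2 = quot (vpow r (rep2 M)) (phi r M ` vcarrier (rep1 M)),
     rmap = (\<lambda>i y. coset (vpow r (rep2 M)) (phi r M ` vcarrier (rep1 M)) (incl (rep2 M) i y))\<rparr>"

end

(*
  Identify A_r \<otimes> M_1 with M_1^r.  Every a \<in> k^r is a linear form on A_r and contracts M_1^r
  to M_1; for a d-dimensional subspace v of A_r, v \<otimes> M_1 is exactly the common kernel of the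
  contractions with the (r - d)-dimensional annihilator of v.  Hence M lies in rep_proj(K_r, d)
  iff for every (r - d)-dimensional W no nonzero t \<in> ker psi_M is killed by all contractions
  with elements of W.  These t are precisely the values f_1(1) of the morphisms
  f : C(W) \<rightarrow> sigma(M), which gives (1).  For d = r - 1 the spaces W are lines k b, and the
  contraction of t with b is psi_sigma(M)(b \<otimes> t), which gives (2).  For (3), psi_sigma^-1(M)
  is the quotient map M_2^r \<rightarrow> coker phi, so its kernel elements are the phi(m); if phi(m) lies
  in u \<otimes> M_2 with dim u < r, contracting with a nonzero a orthogonal to u gives
  psi_M(a \<otimes> m) = 0, and since a lies in a d-dimensional subspace, projectivity forces m = 0.
*)

theory Submission
  imports Defs "HOL-Library.Function_Algebras"
begin

section \<open>The coordinate space of A_r\<close>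

definition coord_scale :: "'k::field \<Rightarrow> (nat \<Rightarrow> 'k) \<Rightarrow> nat \<Rightarrow> 'k" where
  "coord_scale c a = (\<lambda>i. c * a i)"

text \<open>The library's vector spaces are used on all of nat \<Rightarrow> k; A_r is the subspace
  coord_space r (see Ar_simps).\<close>
global_interpretation coord: vector_space "coord_scale :: 'k::field \<Rightarrow> _"
  by unfold_locales (auto simp: coord_scale_def fun_eq_iff algebra_simps)

lemma coord_scale_apply [simp]: "coord_scale c a i = c * a i"
  by (simp add: coord_scale_def)

lemma sum_fun_apply: "(sum f A) i = (\<Sum>x\<in>A. f x i)"
  by (induct A rule: infinite_finite_induct) auto

definition coord_space :: "nat \<Rightarrow> (nat \<Rightarrow> 'k::field) set" where
  "coord_space r = {a. \<forall>i\<ge>r. a i = 0}"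

definition dot :: "nat \<Rightarrow> (nat \<Rightarrow> 'k::field) \<Rightarrow> (nat \<Rightarrow> 'k) \<Rightarrow> 'k" where
  "dot r a x = (\<Sum>i<r. a i * x i)"

definition perp :: "nat \<Rightarrow> (nat \<Rightarrow> 'k::field) set \<Rightarrow> (nat \<Rightarrow> 'k) set" where
  "perp r U = {a \<in> coord_space r. \<forall>x\<in>U. dot r a x = 0}"

definition std_basis :: "nat \<Rightarrow> (nat \<Rightarrow> 'k::field) set" where
  "std_basis r = unitv ` {..<r}"

definition grass :: "nat \<Rightarrow> nat \<Rightarrow> (nat \<Rightarrow> 'k::field) set set" where
  "grass r e = {U. U \<subseteq> coord_space r \<and>
     (\<exists>B. finite B \<and> card B = e \<and> coord.independent B \<and> coord.span B = U)}"

definition biorthogonal :: "nat \<Rightarrow> nat \<Rightarrow> (nat \<Rightarrow> nat \<Rightarrow> 'k::field) \<Rightarrow> (nat \<Rightarrow> nat \<Rightarrow> 'k) \<Rightarrow> bool"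
  where "biorthogonal r e p c \<longleftrightarrow> (\<forall>l<e. \<forall>j<e. dot r (p l) (c j) = (if l = j then 1 else 0))"

lemma subspace_coord_space: "coord.subspace (coord_space r)"
  unfolding coord.subspace_def coord_space_def by auto

lemma unitv_in_coord_space: "i < r \<Longrightarrow> unitv i \<in> coord_space r"
  by (auto simp: coord_space_def unitv_def)

lemma dot_commute: "dot r a x = dot r x a"
  by (simp add: dot_def mult.commute)

lemma dot_add_right: "dot r a (x + y) = dot r a x + dot r a y"
  by (simp add: dot_def algebra_simps sum.distrib)

lemma dot_scale_right: "dot r a (coord_scale c x) = c * dot r a x"
  by (simp add: dot_def sum_distrib_left algebra_simps)

lemma dot_diff_right: "dot r a (x - y) = dot r a x - dot r a y"
  by (simp add: dot_def algebra_simps sum_subtractf)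

lemma dot_zero_right: "dot r a 0 = 0"
  by (simp add: dot_def)

lemma dot_sum_right: "dot r a (sum f A) = (\<Sum>j\<in>A. dot r a (f j))"
  by (simp add: dot_def sum_fun_apply sum_distrib_left) (rule sum.swap)

lemma dot_unitv_right: "i < r \<Longrightarrow> dot r a (unitv i) = a i"
  by (simp add: dot_def unitv_def if_distrib cong: if_cong)

lemma perp_subset: "perp r U \<subseteq> coord_space r"
  by (auto simp: perp_def)

lemma subspace_perp: "coord.subspace (perp r U)"
  unfolding coord.subspace_def perp_def using subspace_coord_space[of r]
  by (auto simp: coord.subspace_def dot_def algebra_simps sum.distrib sum_distrib_left[symmetric])

lemma perp_span: "perp r (coord.span B) = perp r B"
proof
  show "perp r (coord.span B) \<subseteq> perp r B"
    using coord.span_superset by (auto simp: perp_def)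
  show "perp r B \<subseteq> perp r (coord.span B)"
  proof
    fix a assume a: "a \<in> perp r B"
    have "coord.subspace {x. dot r a x = 0}"
      by (auto simp: coord.subspace_def dot_add_right dot_scale_right dot_zero_right)
    then have "coord.span B \<subseteq> {x. dot r a x = 0}"
      using a by (intro coord.span_minimal) (auto simp: perp_def)
    then show "a \<in> perp r (coord.span B)"
      using a by (auto simp: perp_def)
  qed
qed

lemma perp_span_image:
  "perp r (coord.span (p ` {..<e})) = {a \<in> coord_space r. \<forall>l<e. dot r (p l) a = 0}"
  unfolding perp_span by (auto simp: perp_def dot_commute[of r _ "p _"])

lemma coord_space_sum_unitv: "a \<in> coord_space r \<Longrightarrow> a = (\<Sum>i<r. coord_scale (a i) (unitv i))"
  by (auto simp: fun_eq_iff sum_fun_apply unitv_def coord_space_def if_distrib cong: if_cong)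

lemma span_std_basis: "coord.span (std_basis r) = coord_space r"
proof
  show "coord.span (std_basis r) \<subseteq> coord_space r"
    by (rule coord.span_minimal[OF _ subspace_coord_space])
       (auto simp: std_basis_def unitv_in_coord_space)
  show "coord_space r \<subseteq> coord.span (std_basis r)"
  proof
    fix a assume "a \<in> coord_space r"
    then have "a = (\<Sum>i<r. coord_scale (a i) (unitv i))"
      by (rule coord_space_sum_unitv)
    also have "\<dots> \<in> coord.span (std_basis r)"
      by (intro coord.span_sum coord.span_scale coord.span_base) (auto simp: std_basis_def)
    finally show "a \<in> coord.span (std_basis r)" .
  qed
qed

lemma inj_unitv: "inj (unitv :: nat \<Rightarrow> nat \<Rightarrow> 'k::field)"
  by (rule injI) (metis unitv_def zero_neq_one)

lemma card_std_basis: "card (std_basis r :: (nat \<Rightarrow> 'k::field) set) = r"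
  unfolding std_basis_def by (simp add: card_image inj_on_subset[OF inj_unitv])

lemma finite_std_basis [simp]: "finite (std_basis r)"
  by (simp add: std_basis_def)

lemma independent_std_basis: "coord.independent (std_basis r :: (nat \<Rightarrow> 'k::field) set)"
proof (rule coord.independent_if_scalars_zero[OF finite_std_basis])
  fix f :: "(nat \<Rightarrow> 'k) \<Rightarrow> 'k" and x :: "nat \<Rightarrow> 'k"
  assume s: "(\<Sum>x\<in>std_basis r. coord_scale (f x) x) = 0" and x: "x \<in> std_basis r"
  then obtain i where i: "i < r" "x = unitv i"
    by (auto simp: std_basis_def)
  have "(\<Sum>x\<in>std_basis r. coord_scale (f x) x) = (\<Sum>j<r. coord_scale (f (unitv j)) (unitv j))"
    unfolding std_basis_def by (simp add: sum.reindex inj_on_subset[OF inj_unitv])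
  then have "(\<Sum>j<r. f (unitv j) * unitv j i) = 0"
    using s by (simp add: fun_eq_iff sum_fun_apply)
  then show "f x = 0"
    using i by (simp add: unitv_def if_distrib cong: if_cong)
qed

lemma independent_card_le:
  assumes "coord.independent B" "B \<subseteq> coord_space r"
  shows "finite B" "card B \<le> r"
proof -
  have "B \<subseteq> coord.span (std_basis r)"
    using assms(2) by (simp add: span_std_basis)
  then have "finite B \<and> card B \<le> card (std_basis r :: (nat \<Rightarrow> 'a) set)"
    by (intro coord.independent_span_bound assms(1)) simp
  then show "finite B" "card B \<le> r"
    by (simp_all add: card_std_basis)
qed

lemma card_ge_if_span_coord_space:
  assumes "finite B" "coord_space r \<subseteq> coord.span B"
  shows "r \<le> card B"
  using coord.independent_span_bound[OF assms(1) independent_std_basis] assms(2)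
  by (auto simp: card_std_basis span_std_basis[symmetric] dest: subset_trans[OF coord.span_superset])

lemma span_eq_if_card_le:
  assumes T: "finite T" and S: "coord.independent S" and sub: "S \<subseteq> coord.span T"
    and card: "card T \<le> card S"
  shows "coord.span S = coord.span T"
proof
  show "coord.span S \<subseteq> coord.span T"
    using sub by (simp add: coord.span_minimal)
  have "T \<subseteq> coord.span S"
  proof (rule ccontr)
    assume "\<not> T \<subseteq> coord.span S"
    then obtain x where x: "x \<in> T" "x \<notin> coord.span S"
      by auto
    have "finite S"
      using coord.independent_span_bound[OF T S sub] by simp
    moreover have "coord.independent (insert x S)"
      using x S by (simp add: coord.independent_insertI)
    then have "card (insert x S) \<le> card T"
      using coord.independent_span_bound[OF T] sub x coord.span_base by blast
    moreover have "x \<notin> S"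
      using x coord.span_base by blast
    ultimately show False
      using card by simp
  qed
  then show "coord.span T \<subseteq> coord.span S"
    by (simp add: coord.span_minimal)
qed

lemma perp_antimono: "U \<subseteq> V \<Longrightarrow> perp r V \<subseteq> perp r U"
  by (auto simp: perp_def)

lemma exists_linear_relation:
  assumes "m < n" and q: "\<forall>i<n. q i \<in> coord_space m"
  shows "\<exists>lam. (\<exists>i<n. lam i \<noteq> (0::'k::field)) \<and> (\<Sum>i<n. coord_scale (lam i) (q i)) = 0"
proof (cases "inj_on q {..<n}")
  case True
  have "\<not> coord.independent (q ` {..<n})"
    using independent_card_le(2)[of "q ` {..<n}" m] q \<open>m < n\<close> by (auto simp: card_image[OF True])
  then obtain u where u: "\<exists>v\<in>q ` {..<n}. u v \<noteq> 0" "(\<Sum>v\<in>q ` {..<n}. coord_scale (u v) v) = 0"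
    using coord.dependent_finite[of "q ` {..<n}"] by auto
  show ?thesis
    using u by (intro exI[of _ "\<lambda>i. u (q i)"]) (auto simp: sum.reindex[OF True])
next
  case False
  then obtain i j where ij: "i < n" "j < n" "i \<noteq> j" "q i = q j"
    by (auto simp: inj_on_def)
  let ?lam = "\<lambda>k. if k = i then 1 else if k = j then -1 else (0::'k)"
  have "(\<Sum>k<n. coord_scale (?lam k) (q k))
      = (\<Sum>k<n. (if k = i then q i else 0) + (if k = j then - q j else 0))"
    using ij by (intro sum.cong) (auto simp: fun_eq_iff)
  also have "\<dots> = 0"
    using ij by (simp add: sum.distrib)
  finally show ?thesis
    using ij by (intro exI[of _ ?lam]) auto
qed

text \<open>The coefficients of a vanishing combination of the transposed vectors of B give a
  nonzero vector orthogonal to B.\<close>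
lemma exists_nonzero_perp:
  assumes "finite B" and "card B < r"
  shows "\<exists>a\<in>perp r B. a \<noteq> (0::nat \<Rightarrow> 'k::field)"
proof -
  obtain p where p: "bij_betw p {..<card B} B"
    using ex_bij_betw_nat_finite[OF assms(1)] by (auto simp: atLeast0LessThan)
  define q where "q = (\<lambda>i l. if l < card B then p l i else (0::'k))"
  have "\<forall>i<r. q i \<in> coord_space (card B)"
    by (auto simp: q_def coord_space_def)
  then obtain lam where lam: "\<exists>i<r. lam i \<noteq> 0" "(\<Sum>i<r. coord_scale (lam i) (q i)) = 0"
    using exists_linear_relation[OF assms(2)] by blast
  define a where "a = (\<lambda>i. if i < r then lam i else 0)"
  have "dot r a x = 0" if "x \<in> B" for x
  proof -
    obtain l where l: "l < card B" "x = p l"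
      using p \<open>x \<in> B\<close> by (auto simp: bij_betw_def)
    have "(\<Sum>i<r. coord_scale (lam i) (q i)) l = 0"
      using lam(2) by simp
    then show ?thesis
      using l by (simp add: sum_fun_apply q_def dot_def a_def)
  qed
  moreover have "a \<in> coord_space r" "a \<noteq> 0"
    using lam(1) by (auto simp: a_def coord_space_def fun_eq_iff)
  ultimately show ?thesis
    by (auto simp: perp_def)
qed

lemma coord_space_subset_if_perp_trivial:
  assumes U: "coord.subspace U" "U \<subseteq> coord_space d" and perp: "perp d U \<subseteq> {0}"
  shows "coord_space d \<subseteq> U"
proof -
  obtain Q where Q: "Q \<subseteq> U" "coord.independent Q" "U \<subseteq> coord.span Q"
    using coord.maximal_independent_subset by blast
  have fin: "finite Q" and card: "card Q \<le> d"
    using independent_card_le[OF Q(2)] Q(1) U(2) by auto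
  have "\<not> card Q < d"
  proof
    assume "card Q < d"
    then obtain a where "a \<in> perp d Q" "a \<noteq> 0"
      using exists_nonzero_perp[OF fin] by blast
    moreover have "perp d Q \<subseteq> perp d U"
      using perp_antimono[OF Q(3)] by (simp add: perp_span)
    ultimately show False
      using perp by blast
  qed
  moreover have "Q \<subseteq> coord.span (std_basis d)"
    using Q(1) U(2) by (simp add: span_std_basis)
  ultimately have "coord.span Q = coord.span (std_basis d)"
    using card span_eq_if_card_le[OF finite_std_basis Q(2)] by (simp add: card_std_basis)
  then show ?thesis
    using coord.span_minimal[OF Q(1) U(1)] by (simp add: span_std_basis)
qed

lemma independent_coeffs_zero:
  fixes d :: nat
  assumes inj: "inj_on p {..<d}" and ind: "coord.independent (p ` {..<d})"
    and sum: "(\<Sum>l<d. coord_scale (lam l) (p l)) = (0::nat \<Rightarrow> 'k::field)" and "l < d"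
  shows "lam l = 0"
proof -
  define u where "u = (\<lambda>v. lam (the_inv_into {..<d} p v))"
  have "(\<Sum>v\<in>p ` {..<d}. coord_scale (u v) v) = (\<Sum>l<d. coord_scale (lam l) (p l))"
    by (simp add: sum.reindex[OF inj] u_def the_inv_into_f_f[OF inj])
  then have "u (p l) = 0"
    using ind sum \<open>l < d\<close> coord.dependent_finite[of "p ` {..<d}"] by auto
  then show ?thesis
    using \<open>l < d\<close> by (simp add: u_def the_inv_into_f_f[OF inj])
qed

lemma perp_pairing_image_trivial:
  assumes inj: "inj_on p {..<d}" and ind: "coord.independent (p ` {..<d})"
    and p: "\<forall>l<d. p l \<in> coord_space r"
  shows "perp d ((\<lambda>a l. if l < d then dot r (p l) a else 0) ` coord_space r) \<subseteq> {0}"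
proof
  fix lam assume lam: "lam \<in> perp d ((\<lambda>a l. if l < d then dot r (p l) a else 0) ` coord_space r)"
  have "(\<Sum>l<d. coord_scale (lam l) (p l)) i = 0" for i
  proof (cases "i < r")
    case True
    then have "dot d lam (\<lambda>l. if l < d then dot r (p l) (unitv i) else 0) = 0"
      using lam unitv_in_coord_space by (auto simp: perp_def)
    moreover have "(\<lambda>l. if l < d then dot r (p l) (unitv i) else 0) = (\<lambda>l. if l < d then p l i else 0)"
      using True by (simp add: dot_unitv_right fun_eq_iff)
    ultimately show ?thesis
      by (simp add: dot_def sum_fun_apply)
  next
    case False
    then show ?thesis
      using p by (simp add: sum_fun_apply coord_space_def)
  qed
  then have "\<forall>l<d. lam l = 0"
    using independent_coeffs_zero[OF inj ind] by (auto simp: fun_eq_iff)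
  then show "lam \<in> {0}"
    using lam by (auto simp: perp_def coord_space_def fun_eq_iff not_le[symmetric])
qed

text \<open>The pairing map a \<mapsto> (dot r (p l) a)_l is onto k^d by the previous lemma, and
  preimages of the unit vectors form a dual family.\<close>
lemma exists_biorthogonal:
  assumes inj: "inj_on p {..<d}" and ind: "coord.independent (p ` {..<d})"
    and p: "\<forall>l<d. p l \<in> coord_space r"
  shows "\<exists>c. (\<forall>j<d. c j \<in> coord_space r) \<and> biorthogonal r d p (c :: nat \<Rightarrow> nat \<Rightarrow> 'k::field)"
proof -
  define K where "K = (\<lambda>(a::nat\<Rightarrow>'k) l. if l < d then dot r (p l) a else 0)"
  have "Vector_Spaces.linear coord_scale coord_scale K"
    by (auto simp: Vector_Spaces.linear_iff coord.vector_space_axioms K_def fun_eq_iff dot_add_right dot_scale_right)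
  then have "coord.subspace (K ` coord_space r)"
    using module_hom.subspace_image[OF _ subspace_coord_space] by (simp add: module_hom_iff_linear)
  moreover have "K ` coord_space r \<subseteq> coord_space d"
    by (auto simp: K_def coord_space_def)
  ultimately have "coord_space d \<subseteq> K ` coord_space r"
    using coord_space_subset_if_perp_trivial perp_pairing_image_trivial[OF inj ind p, folded K_def] by blast
  then have "\<forall>j<d. \<exists>c\<in>coord_space r. K c = unitv j"
    using unitv_in_coord_space by (metis image_iff subsetD)
  then obtain c where c: "\<forall>j<d. c j \<in> coord_space r \<and> K (c j) = unitv j"
    by metis
  have "dot r (p l) (c j) = (if l = j then 1 else 0)" if "l < d" "j < d" for l j
    using fun_cong[OF conjunct2[OF c[rule_format, OF \<open>j < d\<close>]], of l] \<open>l < d\<close>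
    by (simp add: K_def unitv_def)
  then show ?thesis
    using c by (auto simp: biorthogonal_def)
qed

lemma grass_subset: "U \<in> grass r e \<Longrightarrow> U \<subseteq> coord_space r"
  by (simp add: grass_def)

lemma grass_obtain_basis:
  assumes "U \<in> grass r e"
  obtains p where "inj_on p {..<e}" "coord.independent (p ` {..<e})"
    "\<forall>l<e. p l \<in> coord_space r" "coord.span (p ` {..<e}) = U"
proof -
  obtain B where B: "finite B" "card B = e" "coord.independent B" "coord.span B = U"
    "U \<subseteq> coord_space r"
    using assms by (auto simp: grass_def)
  obtain p where "bij_betw p {..<e} B"
    using ex_bij_betw_nat_finite[OF B(1)] B(2) by (auto simp: atLeast0LessThan)
  then show ?thesis
    using B coord.span_superset[of B] by (intro that) (auto simp: bij_betw_def)
qed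

lemma grass_subspace: "U \<in> grass r e \<Longrightarrow> coord.subspace U"
  by (auto simp: grass_def coord.subspace_span)

lemma grass_le:
  assumes "U \<in> grass r e"
  shows "e \<le> r"
proof -
  obtain B where "card B = e" "coord.independent B" "coord.span B = U" "U \<subseteq> coord_space r"
    using assms by (auto simp: grass_def)
  then show ?thesis
    using independent_card_le(2)[of B r] coord.span_superset[of B] by auto
qed

lemma biorthogonal_inj:
  assumes "biorthogonal r e p c"
  shows "inj_on c {..<e}"
proof (rule inj_onI)
  fix j j' assume j: "j \<in> {..<e}" "j' \<in> {..<e}" and "c j = c j'"
  have "dot r (p j) (c j) = 1"
    using assms j by (simp add: biorthogonal_def)
  then have "dot r (p j) (c j') = 1"
    using \<open>c j = c j'\<close> by simp
  moreover have "dot r (p j) (c j') = (if j = j' then 1 else 0)"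
    using assms j by (simp add: biorthogonal_def)
  ultimately show "j = j'"
    by (simp split: if_splits)
qed

lemma biorthogonal_image_disjoint:
  assumes "biorthogonal r e p c" and "D \<subseteq> {a. \<forall>l<e. dot r (p l) a = 0}"
  shows "c ` {..<e} \<inter> D = {}"
  using assms by (fastforce simp: biorthogonal_def)

lemma independent_biorthogonal_Un:
  assumes bi: "biorthogonal r e p c" and D: "D \<subseteq> {a. \<forall>l<e. dot r (p l) a = 0}"
    "finite D" "coord.independent D"
  shows "coord.independent (c ` {..<e} \<union> D)"
proof (rule coord.independent_if_scalars_zero)
  let ?C = "c ` {..<e}"
  show "finite (?C \<union> D)"
    using D(2) by simp
  fix f x assume sum: "(\<Sum>x\<in>?C \<union> D. coord_scale (f x) x) = 0" and x: "x \<in> ?C \<union> D"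
  have split: "(\<Sum>x\<in>?C \<union> D. coord_scale (f x) x)
      = (\<Sum>j<e. coord_scale (f (c j)) (c j)) + (\<Sum>x\<in>D. coord_scale (f x) x)"
    by (simp add: sum.union_disjoint[OF _ D(2) biorthogonal_image_disjoint[OF bi D(1)]]
        sum.reindex[OF biorthogonal_inj[OF bi]])
  have fc: "f (c l) = 0" if "l < e" for l
  proof -
    have "0 = dot r (p l) (\<Sum>x\<in>?C \<union> D. coord_scale (f x) x)"
      using sum by (simp add: dot_zero_right)
    also have "\<dots> = (\<Sum>j<e. f (c j) * dot r (p l) (c j))"
      using D(1) that by (simp add: split dot_add_right dot_sum_right dot_scale_right subset_iff)
    also have "\<dots> = (\<Sum>j<e. if l = j then f (c j) else 0)"
      using bi that by (intro sum.cong) (auto simp: biorthogonal_def)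
    also have "\<dots> = f (c l)"
      using that by simp
    finally show ?thesis
      by simp
  qed
  then have "(\<Sum>x\<in>D. coord_scale (f x) x) = 0"
    using sum by (simp add: split)
  then have "\<forall>x\<in>D. f x = 0"
    using D(3) coord.dependent_finite[OF D(2)] by auto
  then show "f x = 0"
    using x fc by auto
qed

lemma biorthogonal_residual_perp:
  assumes bi: "biorthogonal r e p c" and c: "\<forall>j<e. c j \<in> coord_space r" and a: "a \<in> coord_space r"
  shows "a - (\<Sum>j<e. coord_scale (dot r (p j) a) (c j)) \<in> {x \<in> coord_space r. \<forall>l<e. dot r (p l) x = 0}"
proof -
  let ?s = "\<Sum>j<e. coord_scale (dot r (p j) a) (c j)"
  have "dot r (p l) (a - ?s) = 0" if "l < e" for l
  proof -
    have "dot r (p l) ?s = (\<Sum>j<e. dot r (p j) a * dot r (p l) (c j))"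
      by (simp add: dot_sum_right dot_scale_right)
    also have "\<dots> = (\<Sum>j<e. if l = j then dot r (p j) a else 0)"
      using bi that by (intro sum.cong) (auto simp: biorthogonal_def)
    finally show ?thesis
      using that by (simp add: dot_diff_right)
  qed
  moreover have "a - ?s \<in> coord_space r"
    using a c by (auto simp: coord_space_def sum_fun_apply)
  ultimately show ?thesis
    by blast
qed

lemma span_biorthogonal_Un:
  fixes c :: "nat \<Rightarrow> nat \<Rightarrow> 'k::field"
  assumes bi: "biorthogonal r e p c" and c: "\<forall>j<e. c j \<in> coord_space r"
    and D: "{a \<in> coord_space r. \<forall>l<e. dot r (p l) a = 0} \<subseteq> coord.span D"
  shows "coord_space r \<subseteq> coord.span (c ` {..<e} \<union> D)"
proof
  fix a :: "nat \<Rightarrow> 'k" assume a: "a \<in> coord_space r"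
  let ?s = "\<Sum>j<e. coord_scale (dot r (p j) a) (c j)"
  have "a - ?s \<in> coord.span (c ` {..<e} \<union> D)"
    using biorthogonal_residual_perp[OF bi c a] D coord.span_mono[of D "c ` {..<e} \<union> D"] by blast
  moreover have "?s \<in> coord.span (c ` {..<e} \<union> D)"
    by (intro coord.span_sum coord.span_scale coord.span_base) auto
  ultimately have "(a - ?s) + ?s \<in> coord.span (c ` {..<e} \<union> D)"
    by (rule coord.span_add)
  then show "a \<in> coord.span (c ` {..<e} \<union> D)"
    by simp
qed

text \<open>A dual family c of a basis of U together with a basis D of perp r U is a basis
  of k^r.\<close>
lemma perp_in_grass:
  assumes U: "U \<in> grass r e"
  shows "perp r U \<in> grass r (r - e)"
proof -
  obtain p where p: "inj_on p {..<e}" "coord.independent (p ` {..<e})"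
    "\<forall>l<e. p l \<in> coord_space r" "coord.span (p ` {..<e}) = U"
    by (rule grass_obtain_basis[OF U])
  obtain c where c: "\<forall>j<e. c j \<in> coord_space r" "biorthogonal r e p c"
    using exists_biorthogonal[OF p(1-3)] by blast
  have P: "perp r U = {a \<in> coord_space r. \<forall>l<e. dot r (p l) a = 0}"
    using perp_span_image[of r p e] p(4) by simp
  obtain D where D: "D \<subseteq> perp r U" "coord.independent D" "perp r U \<subseteq> coord.span D"
    using coord.maximal_independent_subset by blast
  have fin: "finite D"
    using independent_card_le(1)[OF D(2)] D(1) perp_subset by blast
  have Dp: "D \<subseteq> {a. \<forall>l<e. dot r (p l) a = 0}"
    using D(1) P by auto
  let ?C = "c ` {..<e}"
  have ind: "coord.independent (?C \<union> D)"
    by (rule independent_biorthogonal_Un[OF c(2) Dp fin D(2)])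
  have "card (?C \<union> D) = e + card D"
    using card_Un_disjoint[OF finite_imageI[OF finite_lessThan] fin biorthogonal_image_disjoint[OF c(2) Dp]]
      card_image[OF biorthogonal_inj[OF c(2)]] by simp
  moreover have "?C \<union> D \<subseteq> coord_space r"
    using c(1) D(1) perp_subset by blast
  then have "card (?C \<union> D) \<le> r"
    by (rule independent_card_le(2)[OF ind])
  moreover have "r \<le> card (?C \<union> D)"
    using fin by (intro card_ge_if_span_coord_space span_biorthogonal_Un[OF c(2,1)]) (use D(3) P in simp_all)
  ultimately have "card D = r - e"
    by simp
  moreover have "coord.span D = perp r U"
    by (rule coord.span_subspace[OF D(1) D(3) subspace_perp])
  ultimately show ?thesis
    unfolding grass_def using fin D(2) perp_subset by blast
qed

lemma perp_perp:
  assumes W: "W \<in> grass r e"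
  shows "perp r (perp r W) = W"
proof -
  have "perp r (perp r W) \<in> grass r e"
    using perp_in_grass[OF perp_in_grass[OF W]] grass_le[OF W] by simp
  then obtain B2 where B2: "finite B2" "card B2 = e" "coord.span B2 = perp r (perp r W)"
    by (auto simp: grass_def)
  obtain B where B: "card B = e" "coord.independent B" "coord.span B = W"
    using W by (auto simp: grass_def)
  have "W \<subseteq> perp r (perp r W)"
    using grass_subset[OF W] by (auto simp: perp_def dot_commute[of r _ "_ :: nat \<Rightarrow> _"])
  then have "B \<subseteq> coord.span B2"
    using B(3) B2(3) coord.span_superset[of B] by blast
  then have "coord.span B = coord.span B2"
    using span_eq_if_card_le[OF B2(1) B(2)] B(1) B2(2) by simp
  then show ?thesis
    using B(3) B2(3) by simp
qed

lemma exists_grass_containing: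
  assumes a: "a \<in> coord_space r" "a \<noteq> 0" and d: "1 \<le> d" "d \<le> r"
  shows "\<exists>U\<in>grass r d. a \<in> U"
proof -
  obtain B where B: "a \<in> B" "B \<subseteq> coord_space r" "coord.independent B"
    "coord_space r \<subseteq> coord.span B"
    using coord.maximal_independent_subset_extend[of "{a}" "coord_space r"] a by auto
  have fin: "finite B"
    using independent_card_le(1)[OF B(3,2)] .
  have "d - 1 \<le> card (B - {a})"
    using card_ge_if_span_coord_space[OF fin B(4)] d B(1) fin by (simp add: card_Diff_singleton)
  then obtain B0 where B0: "B0 \<subseteq> B - {a}" "card B0 = d - 1" "finite B0"
    by (rule obtain_subset_with_card_n)
  have "card (insert a B0) = d"
    using B0 d by (subst card_insert_disjoint) auto
  moreover have "coord.independent (insert a B0)"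
    using coord.independent_mono[OF B(3), of "insert a B0"] B(1) B0(1) by blast
  moreover have "coord.span (insert a B0) \<subseteq> coord_space r"
    using B(1,2) B0(1) by (intro coord.span_minimal[OF _ subspace_coord_space]) auto
  ultimately have "coord.span (insert a B0) \<in> grass r d"
    using B0(3) unfolding grass_def by blast
  moreover have "a \<in> coord.span (insert a B0)"
    by (simp add: coord.span_base)
  ultimately show ?thesis
    by blast
qed

lemma Ar_simps:
  "vcarrier (Ar r) = coord_space r" "vzero (Ar r) = 0" "vadd (Ar r) = (+)"
  "vsmult (Ar r) = coord_scale"
  by (auto simp: Ar_def vpow_def kline_def coord_space_def fun_eq_iff coord_scale_def)

lemma vspan_Ar: "vspan (Ar r) B = coord.span B"
proof
  show "vspan (Ar r) B \<subseteq> coord.span B"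
  proof
    fix x assume "x \<in> vspan (Ar r) B"
    then show "x \<in> coord.span B"
      by (induct rule: vspan.induct)
         (auto simp only: Ar_simps intro: coord.span_zero coord.span_base coord.span_add coord.span_scale)
  qed
  show "coord.span B \<subseteq> vspan (Ar r) B"
  proof (rule coord.span_minimal)
    show "B \<subseteq> vspan (Ar r) B"
      by (auto intro: vspan.span_gen)
    show "coord.subspace (vspan (Ar r) B)"
      using vspan.span_zero[of "Ar r" B] vspan.span_add[of _ "Ar r" B] vspan.span_smult[of _ "Ar r" B]
      by (auto simp: coord.subspace_def Ar_simps)
  qed
qed

lemma Gr_Ar: "Gr (Ar r) e = grass r e"
proof -
  have sub: "subspace_of (Ar r) U \<longleftrightarrow> U \<subseteq> coord_space r \<and> coord.subspace U" for U
    by (auto simp: subspace_of_def coord.subspace_def Ar_simps)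
  have indep: "lin_indep (Ar r) B \<longleftrightarrow> coord.independent B" for B
    by (simp add: lin_indep_def vspan_Ar coord.dependent_def)
  show ?thesis
    unfolding Gr_def grass_def sub indep vspan_Ar
  proof (intro Collect_cong iffI)
    fix U :: "(nat \<Rightarrow> 'a) set"
    assume "U \<subseteq> coord_space r \<and>
      (\<exists>B. finite B \<and> card B = e \<and> coord.independent B \<and> coord.span B = U)"
    then show "(U \<subseteq> coord_space r \<and> coord.subspace U) \<and>
      (\<exists>B. finite B \<and> card B = e \<and> B \<subseteq> U \<and> coord.independent B \<and> coord.span B = U)"
      using coord.span_superset coord.subspace_span by blast
  qed blast
qed

section \<open>Vector spaces given by explicit operations\<close>

text \<open>The axioms of fd_vs without finite generation, so that powers, subspaces and quotients
  inherit them without any dimension argument.\<close>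
locale vspace_laws =
  fixes V :: "('k::field, 'v) vspace"
  assumes vzero_closed [simp]: "vzero V \<in> vcarrier V"
    and vadd_closed [simp]: "x \<in> vcarrier V \<Longrightarrow> y \<in> vcarrier V \<Longrightarrow> vadd V x y \<in> vcarrier V"
    and vsmult_closed [simp]: "x \<in> vcarrier V \<Longrightarrow> vsmult V a x \<in> vcarrier V"
    and vadd_assoc: "x \<in> vcarrier V \<Longrightarrow> y \<in> vcarrier V \<Longrightarrow> z \<in> vcarrier V \<Longrightarrow>
      vadd V (vadd V x y) z = vadd V x (vadd V y z)"
    and vadd_commute: "x \<in> vcarrier V \<Longrightarrow> y \<in> vcarrier V \<Longrightarrow> vadd V x y = vadd V y x"
    and vzero_vadd [simp]: "x \<in> vcarrier V \<Longrightarrow> vadd V (vzero V) x = x"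
    and vadd_inverse: "x \<in> vcarrier V \<Longrightarrow> \<exists>y\<in>vcarrier V. vadd V x y = vzero V"
    and vsmult_one [simp]: "x \<in> vcarrier V \<Longrightarrow> vsmult V 1 x = x"
    and vsmult_vsmult: "x \<in> vcarrier V \<Longrightarrow> vsmult V a (vsmult V b x) = vsmult V (a * b) x"
    and vsmult_add_left: "x \<in> vcarrier V \<Longrightarrow>
      vsmult V (a + b) x = vadd V (vsmult V a x) (vsmult V b x)"
    and vsmult_add_right: "x \<in> vcarrier V \<Longrightarrow> y \<in> vcarrier V \<Longrightarrow>
      vsmult V a (vadd V x y) = vadd V (vsmult V a x) (vsmult V a y)"

lemma fd_vs_vspace_laws: "fd_vs V \<Longrightarrow> vspace_laws V"
  unfolding fd_vs_def vspace_laws_def by (elim conjE) (intro conjI allI impI; simp)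

context vspace_laws
begin

lemma vadd_vzero [simp]: "x \<in> vcarrier V \<Longrightarrow> vadd V x (vzero V) = x"
  using vadd_commute[of x "vzero V"] by simp

lemma vadd_left_cancel:
  assumes x: "x \<in> vcarrier V" and y: "y \<in> vcarrier V" and z: "z \<in> vcarrier V"
    and eq: "vadd V x y = vadd V x z"
  shows "y = z"
proof -
  obtain n where n: "n \<in> vcarrier V" "vadd V x n = vzero V"
    using vadd_inverse[OF x] by blast
  have "y = vadd V (vadd V n x) y"
    using n x y vadd_commute by simp
  also have "\<dots> = vadd V (vadd V n x) z"
    using n x y z eq by (simp add: vadd_assoc)
  also have "\<dots> = z"
    using n x z vadd_commute by simp
  finally show ?thesis .
qed

lemma vsmult_zero_left [simp]: "x \<in> vcarrier V \<Longrightarrow> vsmult V 0 x = vzero V"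
  using vsmult_add_left[of x 0 0] vadd_left_cancel[of "vsmult V 0 x" "vsmult V 0 x" "vzero V"]
  by simp

lemma vsmult_vzero [simp]: "vsmult V a (vzero V) = vzero V"
  using vsmult_add_right[of "vzero V" "vzero V" a]
    vadd_left_cancel[of "vsmult V a (vzero V)" "vsmult V a (vzero V)" "vzero V"]
  by simp

lemma vadd_vsmult_minus_one: "x \<in> vcarrier V \<Longrightarrow> vadd V x (vsmult V (-1) x) = vzero V"
  using vsmult_add_left[of x 1 "-1"] by simp

lemma vsmult_eq_vzero_imp: "a \<noteq> 0 \<Longrightarrow> x \<in> vcarrier V \<Longrightarrow> vsmult V a x = vzero V \<Longrightarrow> x = vzero V"
  by (metis vsmult_vsmult vsmult_one vsmult_vzero field_class.field_inverse)

lemma vadd_vadd_swap: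
  "a \<in> vcarrier V \<Longrightarrow> b \<in> vcarrier V \<Longrightarrow> c \<in> vcarrier V \<Longrightarrow> d \<in> vcarrier V \<Longrightarrow>
   vadd V (vadd V a b) (vadd V c d) = vadd V (vadd V a c) (vadd V b d)"
  by (metis vadd_assoc vadd_closed vadd_commute)

lemma vsum_closed: "(\<And>i. i < n \<Longrightarrow> f i \<in> vcarrier V) \<Longrightarrow> vsum V f n \<in> vcarrier V"
  by (induct n) auto

lemma vsum_cong: "(\<And>i. i < n \<Longrightarrow> f i = g i) \<Longrightarrow> vsum V f n = vsum V g n"
  by (induct n) auto

lemma vsum_vadd:
  "(\<And>i. i < n \<Longrightarrow> f i \<in> vcarrier V) \<Longrightarrow> (\<And>i. i < n \<Longrightarrow> g i \<in> vcarrier V) \<Longrightarrow>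
   vsum V (\<lambda>i. vadd V (f i) (g i)) n = vadd V (vsum V f n) (vsum V g n)"
  by (induct n) (simp_all add: vadd_vadd_swap vsum_closed)

lemma vsum_vsmult:
  "(\<And>i. i < n \<Longrightarrow> f i \<in> vcarrier V) \<Longrightarrow>
   vsmult V a (vsum V f n) = vsum V (\<lambda>i. vsmult V a (f i)) n"
  by (induct n) (auto simp: vsmult_add_right vsum_closed)

lemma vsum_vzero: "vsum V (\<lambda>i. vzero V) n = vzero V"
  by (induct n) auto

lemma vsum_vsmult_left: "m \<in> vcarrier V \<Longrightarrow> vsum V (\<lambda>i. vsmult V (c i) m) n = vsmult V (\<Sum>i<n. c i) m"
  by (induct n) (auto simp: vsmult_add_left)

lemma vsum_delta:
  assumes "i < n" "\<And>j. j < n \<Longrightarrow> j \<noteq> i \<Longrightarrow> f j = vzero V" "f i \<in> vcarrier V"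
  shows "vsum V f n = f i"
  using assms
proof (induct n)
  case (Suc n)
  show ?case
  proof (cases "i = n")
    case True
    then have "vsum V f n = vsum V (\<lambda>i. vzero V) n"
      using Suc.prems by (intro vsum_cong) auto
    then show ?thesis
      using True Suc.prems by (simp add: vsum_vzero)
  next
    case False
    then show ?thesis
      using Suc by auto
  qed
qed simp

end

lemma lin_map_vzero:
  assumes V: "vspace_laws V" and W: "vspace_laws W" and f: "lin_map V W f"
  shows "f (vzero V) = vzero W"
proof -
  have z: "vzero V \<in> vcarrier V"
    using V by (rule vspace_laws.vzero_closed)
  then have fz: "f (vzero V) \<in> vcarrier W"
    using f by (simp add: lin_map_def)
  have "vadd W (f (vzero V)) (f (vzero V)) = f (vadd V (vzero V) (vzero V))"
    using f z by (simp add: lin_map_def)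
  also have "\<dots> = vadd W (f (vzero V)) (vzero W)"
    using vspace_laws.vzero_vadd[OF V z] vspace_laws.vadd_vzero[OF W fz] by simp
  finally show ?thesis
    using vspace_laws.vadd_left_cancel[OF W fz fz vspace_laws.vzero_closed[OF W]] by simp
qed

lemma vpow_simps:
  "vcarrier (vpow r V) = {t. (\<forall>i<r. t i \<in> vcarrier V) \<and> (\<forall>i\<ge>r. t i = vzero V)}"
  "vzero (vpow r V) = (\<lambda>_. vzero V)"
  "vadd (vpow r V) = (\<lambda>s t i. vadd V (s i) (t i))"
  "vsmult (vpow r V) = (\<lambda>a t i. vsmult V a (t i))"
  by (simp_all add: vpow_def)

lemma vsum_vpow_apply: "vsum (vpow r V) F n i = vsum V (\<lambda>j. F j i) n"
  by (induct n) (simp_all add: vpow_simps)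

context vspace_laws
begin

lemma vpow_mem: "t \<in> vcarrier (vpow r V) \<Longrightarrow> t i \<in> vcarrier V"
  by (cases "i < r") (auto simp: vpow_simps)

lemma vspace_laws_vpow: "vspace_laws (vpow r V)"
proof unfold_locales
  let ?C = "vcarrier (vpow r V)"
  show "vzero (vpow r V) \<in> ?C"
    by (simp add: vpow_simps)
  show "vadd (vpow r V) x y \<in> ?C" if "x \<in> ?C" "y \<in> ?C" for x y
    using that by (auto simp: vpow_simps)
  show "vsmult (vpow r V) a x \<in> ?C" if "x \<in> ?C" for a x
    using that by (auto simp: vpow_simps)
  show "vadd (vpow r V) (vadd (vpow r V) x y) z = vadd (vpow r V) x (vadd (vpow r V) y z)"
    if "x \<in> ?C" "y \<in> ?C" "z \<in> ?C" for x y z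
    using vadd_assoc[OF vpow_mem vpow_mem vpow_mem, OF that] by (simp add: vpow_simps)
  show "vadd (vpow r V) x y = vadd (vpow r V) y x" if "x \<in> ?C" "y \<in> ?C" for x y
    using vadd_commute[OF vpow_mem vpow_mem, OF that] by (simp add: vpow_simps)
  show "vadd (vpow r V) (vzero (vpow r V)) x = x" if "x \<in> ?C" for x
    using vpow_mem[OF that] by (simp add: vpow_simps)
  show "\<exists>y\<in>?C. vadd (vpow r V) x y = vzero (vpow r V)" if "x \<in> ?C" for x
    using that vpow_mem[OF that]
    by (intro bexI[of _ "\<lambda>i. vsmult V (-1) (x i)"]) (auto simp: vpow_simps vadd_vsmult_minus_one)
  show "vsmult (vpow r V) 1 x = x" if "x \<in> ?C" for x
    using vpow_mem[OF that] by (simp add: vpow_simps)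
  show "vsmult (vpow r V) a (vsmult (vpow r V) b x) = vsmult (vpow r V) (a * b) x"
    if "x \<in> ?C" for a b x
    using vsmult_vsmult[OF vpow_mem[OF that]] by (simp add: vpow_simps)
  show "vsmult (vpow r V) (a + b) x = vadd (vpow r V) (vsmult (vpow r V) a x) (vsmult (vpow r V) b x)"
    if "x \<in> ?C" for a b x
    using vsmult_add_left[OF vpow_mem[OF that]] by (simp add: vpow_simps)
  show "vsmult (vpow r V) a (vadd (vpow r V) x y)
      = vadd (vpow r V) (vsmult (vpow r V) a x) (vsmult (vpow r V) a y)"
    if "x \<in> ?C" "y \<in> ?C" for a x y
    using vsmult_add_right[OF vpow_mem vpow_mem, OF that] by (simp add: vpow_simps)
qed

lemma vspace_laws_subspace:
  assumes U: "subspace_of V U"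
  shows "vspace_laws (V\<lparr>vcarrier := U\<rparr>)"
proof -
  have UV: "U \<subseteq> vcarrier V"
    using U by (simp add: subspace_of_def)
  then have mem: "x \<in> U \<Longrightarrow> x \<in> vcarrier V" for x
    by blast
  show ?thesis
  proof unfold_locales
    fix x assume "x \<in> vcarrier (V\<lparr>vcarrier := U\<rparr>)"
    then show "\<exists>y\<in>vcarrier (V\<lparr>vcarrier := U\<rparr>). vadd (V\<lparr>vcarrier := U\<rparr>) x y = vzero (V\<lparr>vcarrier := U\<rparr>)"
      using U UV by (intro bexI[of _ "vsmult V (-1) x"]) (auto simp: subspace_of_def vadd_vsmult_minus_one)
  qed (use U in \<open>auto simp: subspace_of_def vadd_assoc[OF mem mem mem] vsmult_vsmult[OF mem]
      vsmult_add_left[OF mem] vsmult_add_right[OF mem mem] intro: vadd_commute[OF mem mem] mem\<close>)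
qed

end

lemma vspace_laws_kline: "vspace_laws (kline :: ('k::field, 'k) vspace)"
  by unfold_locales (auto simp: kline_def algebra_simps intro: exI[of _ "- _"])

lemma vspace_laws_Ar: "vspace_laws (Ar r :: ('k::field, nat \<Rightarrow> 'k) vspace)"
  unfolding Ar_def by (rule vspace_laws.vspace_laws_vpow[OF vspace_laws_kline])

lemma quot_simps:
  "vzero (quot V U) = coset V U (vzero V)" "vcarrier (quot V U) = coset V U ` vcarrier V"
  by (simp_all add: quot_def)

context vspace_laws
begin

lemma coset_vadd_mem:
  assumes U: "subspace_of V U" and x: "x \<in> vcarrier V" and u: "u \<in> U"
  shows "coset V U (vadd V x u) = coset V U x"
proof
  have UV: "U \<subseteq> vcarrier V" and Uadd: "\<And>x y. x \<in> U \<Longrightarrow> y \<in> U \<Longrightarrow> vadd V x y \<in> U"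
    and Usmult: "\<And>a x. x \<in> U \<Longrightarrow> vsmult V a x \<in> U"
    using U by (auto simp: subspace_of_def)
  have uV: "u \<in> vcarrier V"
    using u UV by blast
  show "coset V U (vadd V x u) \<subseteq> coset V U x"
  proof
    fix w assume "w \<in> coset V U (vadd V x u)"
    then obtain u' where u': "u' \<in> U" "w = vadd V (vadd V x u) u'"
      by (auto simp: coset_def)
    then have "w = vadd V x (vadd V u u')"
      using x uV UV by (auto simp: vadd_assoc)
    then show "w \<in> coset V U x"
      using Uadd[OF u u'(1)] by (auto simp: coset_def)
  qed
  show "coset V U x \<subseteq> coset V U (vadd V x u)"
  proof
    fix w assume "w \<in> coset V U x"
    then obtain u' where u': "u' \<in> U" "w = vadd V x u'"
      by (auto simp: coset_def)
    let ?n = "vsmult V (-1) u"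
    have u'V: "u' \<in> vcarrier V"
      using u'(1) UV by blast
    have "vadd V (vadd V x u) (vadd V ?n u') = vadd V x (vadd V (vadd V u ?n) u')"
      using x uV u'V by (simp add: vadd_assoc)
    also have "\<dots> = w"
      using uV u'V u'(2) by (simp add: vadd_vsmult_minus_one)
    finally show "w \<in> coset V U (vadd V x u)"
      using Uadd[OF Usmult[OF u] u'(1)] by (auto simp: coset_def)
  qed
qed

lemma mem_coset_self: "subspace_of V U \<Longrightarrow> x \<in> vcarrier V \<Longrightarrow> x \<in> coset V U x"
  by (force simp: coset_def subspace_of_def)

lemma some_mem_coset:
  assumes "subspace_of V U" and "x \<in> vcarrier V"
  shows "\<exists>u\<in>U. (SOME z. z \<in> coset V U x) = vadd V x u"
  using someI[of "\<lambda>z. z \<in> coset V U x", OF mem_coset_self[OF assms]] by (auto simp: coset_def)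

lemma quot_vadd_coset:
  assumes U: "subspace_of V U" and x: "x \<in> vcarrier V" and y: "y \<in> vcarrier V"
  shows "vadd (quot V U) (coset V U x) (coset V U y) = coset V U (vadd V x y)"
proof -
  obtain u where u: "u \<in> U" "(SOME z. z \<in> coset V U x) = vadd V x u"
    using some_mem_coset[OF U x] by blast
  obtain u' where u': "u' \<in> U" "(SOME z. z \<in> coset V U y) = vadd V y u'"
    using some_mem_coset[OF U y] by blast
  have uV: "u \<in> vcarrier V" "u' \<in> vcarrier V" and uu': "vadd V u u' \<in> U"
    using U u u' by (auto simp: subspace_of_def)
  have "vadd (quot V U) (coset V U x) (coset V U y) = coset V U (vadd V (vadd V x u) (vadd V y u'))"
    using u u' by (simp add: quot_def)
  also have "\<dots> = coset V U (vadd V (vadd V x y) (vadd V u u'))"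
    using x y uV by (simp add: vadd_vadd_swap)
  also have "\<dots> = coset V U (vadd V x y)"
    using coset_vadd_mem[OF U _ uu'] x y by simp
  finally show ?thesis .
qed

lemma quot_vsmult_coset:
  assumes U: "subspace_of V U" and x: "x \<in> vcarrier V"
  shows "vsmult (quot V U) a (coset V U x) = coset V U (vsmult V a x)"
proof -
  obtain u where u: "u \<in> U" "(SOME z. z \<in> coset V U x) = vadd V x u"
    using some_mem_coset[OF U x] by blast
  have uV: "u \<in> vcarrier V" and au: "vsmult V a u \<in> U"
    using U u by (auto simp: subspace_of_def)
  have "vsmult (quot V U) a (coset V U x) = coset V U (vadd V (vsmult V a x) (vsmult V a u))"
    using u x uV by (simp add: quot_def vsmult_add_right)
  also have "\<dots> = coset V U (vsmult V a x)"
    using coset_vadd_mem[OF U _ au] x by simp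
  finally show ?thesis .
qed

lemma coset_eq_coset_vzero_iff:
  assumes U: "subspace_of V U" and x: "x \<in> vcarrier V"
  shows "coset V U x = coset V U (vzero V) \<longleftrightarrow> x \<in> U"
proof
  assume "coset V U x = coset V U (vzero V)"
  then have "x \<in> coset V U (vzero V)"
    using mem_coset_self[OF U x] by simp
  then show "x \<in> U"
    using U by (auto simp: coset_def subspace_of_def)
next
  assume "x \<in> U"
  then show "coset V U x = coset V U (vzero V)"
    using coset_vadd_mem[OF U vzero_closed \<open>x \<in> U\<close>] x by simp
qed

end

section \<open>Contraction of A_r \<otimes> V with linear forms on A_r\<close>

text \<open>A vector a \<in> k^r is read as the linear form gamma_(i+1) \<mapsto> a i on A_r, and
  contract V r a applies it to the first factor of A_r \<otimes> V = V^r.  In the same picture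
  tensor_span r U V is U \<otimes> V.\<close>
definition contract :: "('k::field, 'v) vspace \<Rightarrow> nat \<Rightarrow> (nat \<Rightarrow> 'k) \<Rightarrow> (nat \<Rightarrow> 'v) \<Rightarrow> 'v" where
  "contract V r a t = vsum V (\<lambda>i. vsmult V (a i) (t i)) r"

definition tensor_span :: "nat \<Rightarrow> (nat \<Rightarrow> 'k::field) set \<Rightarrow> ('k, 'v) vspace \<Rightarrow> (nat \<Rightarrow> 'v) set"
  where "tensor_span r U V =
    vspan (vpow r V) {(\<lambda>i. vsmult V (a i) m) | a m. a \<in> U \<and> m \<in> vcarrier V}"

lemma tens_eq_tensor_span: "tens r U M = tensor_span r U (rep1 M)"
  by (simp add: tens_def tensor_span_def)

context vspace_laws
begin

context
  fixes r :: nat and t :: "nat \<Rightarrow> 'v"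
  assumes t: "t \<in> vcarrier (vpow r V)"
begin

lemma contract_closed: "contract V r a t \<in> vcarrier V"
  unfolding contract_def using t by (intro vsum_closed) (simp add: vpow_mem)

lemma contract_add_left: "contract V r (a + b) t = vadd V (contract V r a t) (contract V r b t)"
  unfolding contract_def using t
  by (subst vsum_vadd[symmetric]) (auto intro!: vsum_cong simp: vsmult_add_left vpow_mem)

lemma contract_scale_left: "contract V r (coord_scale c a) t = vsmult V c (contract V r a t)"
  unfolding contract_def using t
  by (subst vsum_vsmult) (auto intro!: vsum_cong simp: vsmult_vsmult vpow_mem)

lemma contract_zero_left: "contract V r 0 t = vzero V"
  unfolding contract_def using t
  by (subst vsum_vzero[symmetric]) (auto intro!: vsum_cong simp: vpow_mem)

lemma contract_sum_left:
  "contract V r (\<Sum>j<n. coord_scale (lam j) (c j)) t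
    = vsum V (\<lambda>j. vsmult V (lam j) (contract V r (c j) t)) n"
proof (induct n)
  case 0
  then show ?case
    by (simp only: lessThan_0 sum.empty contract_zero_left vsum.simps)
next
  case (Suc n)
  then show ?case
    by (simp only: sum.lessThan_Suc contract_add_left contract_scale_left vsum.simps)
qed

lemma contract_unitv: "i < r \<Longrightarrow> contract V r (unitv i) t = t i"
  unfolding contract_def using t
  by (subst vsum_delta[of i]) (auto simp: unitv_def vpow_mem)

end

lemma contract_pure: "m \<in> vcarrier V \<Longrightarrow> contract V r a (\<lambda>i. vsmult V (b i) m) = vsmult V (dot r a b) m"
  unfolding contract_def dot_def by (simp add: vsmult_vsmult vsum_vsmult_left)

lemma contract_vadd_right:
  assumes "s \<in> vcarrier (vpow r V)" "t \<in> vcarrier (vpow r V)"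
  shows "contract V r a (vadd (vpow r V) s t) = vadd V (contract V r a s) (contract V r a t)"
proof -
  have st: "\<And>i. s i \<in> vcarrier V" "\<And>i. t i \<in> vcarrier V"
    using assms by (simp_all add: vpow_mem)
  have "contract V r a (vadd (vpow r V) s t)
      = vsum V (\<lambda>i. vadd V (vsmult V (a i) (s i)) (vsmult V (a i) (t i))) r"
    unfolding contract_def by (intro vsum_cong) (simp add: vpow_simps vsmult_add_right st)
  then show ?thesis
    by (simp add: contract_def vsum_vadd st)
qed

lemma contract_vsmult_right:
  assumes "t \<in> vcarrier (vpow r V)"
  shows "contract V r a (vsmult (vpow r V) c t) = vsmult V c (contract V r a t)"
proof -
  have t: "\<And>i. t i \<in> vcarrier V"
    using assms by (simp add: vpow_mem)
  have "contract V r a (vsmult (vpow r V) c t) = vsum V (\<lambda>i. vsmult V c (vsmult V (a i) (t i))) r"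
    unfolding contract_def by (intro vsum_cong) (simp add: vpow_simps vsmult_vsmult t mult.commute)
  then show ?thesis
    by (simp add: contract_def vsum_vsmult t)
qed

lemma contract_vzero_right: "contract V r a (vzero (vpow r V)) = vzero V"
  by (simp add: contract_def vpow_simps vsum_vzero)

lemma tensor_span_annihilated:
  assumes U: "U \<subseteq> coord_space r" and a: "\<forall>b\<in>U. dot r a b = 0" and t: "t \<in> tensor_span r U V"
  shows "t \<in> vcarrier (vpow r V) \<and> contract V r a t = vzero V"
  using t unfolding tensor_span_def
proof (induct rule: vspan.induct)
  case span_zero
  show ?case
    by (simp add: vpow_simps contract_def vsum_vzero)
next
  case (span_gen x)
  then obtain b m where "b \<in> U" "m \<in> vcarrier V" "x = (\<lambda>i. vsmult V (b i) m)"
    by blast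
  then show ?case
    using U a by (auto simp: vpow_simps coord_space_def contract_pure)
next
  case (span_add x y)
  then show ?case
    by (simp add: contract_vadd_right vspace_laws.vadd_closed[OF vspace_laws_vpow])
next
  case (span_smult x c)
  then show ?case
    by (simp add: contract_vsmult_right vspace_laws.vsmult_closed[OF vspace_laws_vpow])
qed

lemma vsum_pure_in_tensor_span:
  assumes "\<And>j. j < n \<Longrightarrow> b j \<in> U \<and> m j \<in> vcarrier V"
  shows "vsum (vpow r V) (\<lambda>j i. vsmult V (b j i) (m j)) n \<in> tensor_span r U V"
  using assms unfolding tensor_span_def
proof (induct n)
  case (Suc n)
  then have "(\<lambda>i. vsmult V (b n i) (m n)) \<in> {\<lambda>i. vsmult V (a i) m | a m. a \<in> U \<and> m \<in> vcarrier V}"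
    by blast
  then show ?case
    using Suc by (simp add: vspan.span_add vspan.span_gen)
qed (simp add: vspan.span_zero)

text \<open>Coordinate i: the vector unitv i - \<Sum>j p j i \<cdot> c j is orthogonal to every p l, so
  its contraction with t vanishes.\<close>
lemma annihilated_eq_vsum_pure:
  assumes bi: "biorthogonal r d p c" and c: "\<forall>j<d. c j \<in> coord_space r"
    and p: "\<forall>l<d. p l \<in> coord_space r" and t: "t \<in> vcarrier (vpow r V)"
    and ann: "\<forall>a\<in>{x \<in> coord_space r. \<forall>l<d. dot r (p l) x = 0}. contract V r a t = vzero V"
  shows "t = vsum (vpow r V) (\<lambda>j i. vsmult V (p j i) (contract V r (c j) t)) d"
proof -
  define m where "m j = contract V r (c j) t" for j
  have m: "m j \<in> vcarrier V" for j
    by (simp add: m_def contract_closed[OF t])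
  have "t i = vsum V (\<lambda>j. vsmult V (p j i) (m j)) d" for i
  proof (cases "i < r")
    case True
    let ?s = "\<Sum>j<d. coord_scale (p j i) (c j)"
    have "contract V r (unitv i - ?s) t = vzero V"
      using ann biorthogonal_residual_perp[OF bi c unitv_in_coord_space[OF True]]
      by (simp add: dot_unitv_right[OF True])
    moreover have "t i = contract V r ((unitv i - ?s) + ?s) t"
      using contract_unitv[OF t True] by simp
    ultimately show ?thesis
      using m by (simp only: contract_add_left[OF t] contract_sum_left[OF t] m_def vzero_vadd vsum_closed
          vsmult_closed)
  next
    case False
    then have "vsum V (\<lambda>j. vsmult V (p j i) (m j)) d = vsum V (\<lambda>j. vzero V) d"
      using p m by (intro vsum_cong) (simp add: coord_space_def)
    then show ?thesis
      using t False by (simp add: vsum_vzero vpow_simps)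
  qed
  then show ?thesis
    by (simp add: fun_eq_iff vsum_vpow_apply m_def)
qed

lemma annihilated_in_tensor_span:
  assumes v: "v \<in> grass r d" and t: "t \<in> vcarrier (vpow r V)"
    and ann: "\<forall>a\<in>perp r v. contract V r a t = vzero V"
  shows "t \<in> tensor_span r v V"
proof -
  obtain p where p: "inj_on p {..<d}" "coord.independent (p ` {..<d})"
    "\<forall>l<d. p l \<in> coord_space r" "coord.span (p ` {..<d}) = v"
    by (rule grass_obtain_basis[OF v])
  obtain c where c: "\<forall>j<d. c j \<in> coord_space r" "biorthogonal r d p c"
    using exists_biorthogonal[OF p(1-3)] by blast
  have "t = vsum (vpow r V) (\<lambda>j i. vsmult V (p j i) (contract V r (c j) t)) d"
    using annihilated_eq_vsum_pure[OF c(2,1) p(3) t] ann perp_span_image[of r p d] p(4) by simp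
  moreover have "p j \<in> v" if "j < d" for j
    using that p(4) coord.span_base[of _ "p ` {..<d}"] by blast
  then have "vsum (vpow r V) (\<lambda>j i. vsmult V (p j i) (contract V r (c j) t)) d \<in> tensor_span r v V"
    by (intro vsum_pure_in_tensor_span) (simp add: contract_closed[OF t])
  ultimately show ?thesis
    by simp
qed

lemma tensor_span_eq_annihilated:
  assumes "v \<in> grass r d"
  shows "tensor_span r v V = {t \<in> vcarrier (vpow r V). \<forall>a\<in>perp r v. contract V r a t = vzero V}"
proof
  show "tensor_span r v V \<subseteq> {t \<in> vcarrier (vpow r V). \<forall>a\<in>perp r v. contract V r a t = vzero V}"
  proof (intro subsetI CollectI conjI ballI)
    fix t assume t: "t \<in> tensor_span r v V"
    show "t \<in> vcarrier (vpow r V)"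
      using tensor_span_annihilated[OF grass_subset[OF assms] _ t, of 0] by (simp add: dot_def)
    show "contract V r a t = vzero V" if "a \<in> perp r v" for a
      using tensor_span_annihilated[OF grass_subset[OF assms] _ t, of a] that by (simp add: perp_def)
  qed
  show "{t \<in> vcarrier (vpow r V). \<forall>a\<in>perp r v. contract V r a t = vzero V} \<subseteq> tensor_span r v V"
    using annihilated_in_tensor_span[OF assms] by blast
qed

lemma tensor_span_line:
  assumes "s \<in> tensor_span r (coord.span {b}) V"
  shows "\<exists>m\<in>vcarrier V. s = (\<lambda>i. vsmult V (b i) m)"
  using assms unfolding tensor_span_def
proof (induct rule: vspan.induct)
  case span_zero
  show ?case
    by (intro bexI[of _ "vzero V"]) (simp_all add: vpow_simps)
next
  case (span_gen x)
  then obtain a m where am: "a \<in> coord.span {b}" "m \<in> vcarrier V" "x = (\<lambda>i. vsmult V (a i) m)"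
    by blast
  then obtain k where "a = coord_scale k b"
    using coord.span_singleton by blast
  then show ?case
    using am by (intro bexI[of _ "vsmult V k m"]) (simp_all add: vsmult_vsmult mult.commute)
next
  case (span_add x y)
  then obtain m1 m2 where "m1 \<in> vcarrier V" "x = (\<lambda>i. vsmult V (b i) m1)"
    "m2 \<in> vcarrier V" "y = (\<lambda>i. vsmult V (b i) m2)"
    by blast
  then show ?case
    by (intro bexI[of _ "vadd V m1 m2"]) (simp_all add: vpow_simps vsmult_add_right)
next
  case (span_smult x c)
  then obtain m where "m \<in> vcarrier V" "x = (\<lambda>i. vsmult V (b i) m)"
    by blast
  then show ?case
    by (intro bexI[of _ "vsmult V c m"]) (simp_all add: vpow_simps vsmult_vsmult mult.commute)
qed

end

context
  fixes r :: nat and W :: "(nat \<Rightarrow> 'k::field) set"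
  assumes W: "W \<subseteq> coord_space r" "coord.subspace W"
begin

lemma subspace_of_Ar: "subspace_of (Ar r) W"
  using W by (auto simp: subspace_of_def coord.subspace_def Ar_simps)

lemma quot_Ar_cases:
  assumes "X \<in> vcarrier (quot (Ar r) W)"
  obtains a where "a \<in> coord_space r" "X = coset (Ar r) W a"
  using assms by (auto simp: quot_simps Ar_simps)

lemma coset_Ar_in_quot: "a \<in> coord_space r \<Longrightarrow> coset (Ar r) W a \<in> vcarrier (quot (Ar r) W)"
  by (simp add: quot_simps Ar_simps)

lemma quot_Ar_vadd: "a \<in> coord_space r \<Longrightarrow> b \<in> coord_space r \<Longrightarrow>
    vadd (quot (Ar r) W) (coset (Ar r) W a) (coset (Ar r) W b) = coset (Ar r) W (a + b)"
  using vspace_laws.quot_vadd_coset[OF vspace_laws_Ar subspace_of_Ar] by (simp add: Ar_simps)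

lemma quot_Ar_vsmult: "a \<in> coord_space r \<Longrightarrow>
    vsmult (quot (Ar r) W) c (coset (Ar r) W a) = coset (Ar r) W (coord_scale c a)"
  using vspace_laws.quot_vsmult_coset[OF vspace_laws_Ar subspace_of_Ar] by (simp add: Ar_simps)

lemma coset_Ar_eq_zero_iff: "a \<in> coord_space r \<Longrightarrow> coset (Ar r) W a = coset (Ar r) W 0 \<longleftrightarrow> a \<in> W"
  using vspace_laws.coset_eq_coset_vzero_iff[OF vspace_laws_Ar subspace_of_Ar] by (simp add: Ar_simps)

lemma some_coset_Ar: "a \<in> coord_space r \<Longrightarrow> \<exists>u\<in>W. (SOME z. z \<in> coset (Ar r) W a) = a + u"
  using vspace_laws.some_mem_coset[OF vspace_laws_Ar subspace_of_Ar] by (simp add: Ar_simps)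

end

context vspace_laws
begin

context
  fixes r :: nat and W :: "(nat \<Rightarrow> 'k) set"
  assumes W: "W \<subseteq> coord_space r" "coord.subspace W"
begin

lemma contract_some_coset:
  assumes t: "t \<in> vcarrier (vpow r V)" and ann: "\<forall>a\<in>W. contract V r a t = vzero V"
    and a: "a \<in> coord_space r"
  shows "contract V r (SOME z. z \<in> coset (Ar r) W a) t = contract V r a t"
proof -
  obtain u where "u \<in> W" "(SOME z. z \<in> coset (Ar r) W a) = a + u"
    using some_coset_Ar[OF W a] by blast
  then show ?thesis
    using ann by (simp add: contract_add_left[OF t] contract_closed[OF t])
qed

lemma lin_map_quot_contract:
  assumes t: "t \<in> vcarrier (vpow r V)" and ann: "\<forall>a\<in>W. contract V r a t = vzero V"
  shows "lin_map (quot (Ar r) W) V (\<lambda>X. contract V r (SOME a. a \<in> X) t)"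
  unfolding lin_map_def
proof (intro conjI ballI allI)
  note f = contract_some_coset[OF t ann]
  fix X assume "X \<in> vcarrier (quot (Ar r) W)"
  then obtain a where a: "a \<in> coord_space r" "X = coset (Ar r) W a"
    by (rule quot_Ar_cases[OF W])
  then show "contract V r (SOME a. a \<in> X) t \<in> vcarrier V"
    by (simp add: f contract_closed[OF t])
  show "contract V r (SOME a. a \<in> vsmult (quot (Ar r) W) c X) t = vsmult V c (contract V r (SOME a. a \<in> X) t)"
    for c
    using a by (simp add: quot_Ar_vsmult[OF W] f contract_scale_left[OF t]
        coord.subspace_scale[OF subspace_coord_space])
  fix Y assume "Y \<in> vcarrier (quot (Ar r) W)"
  then obtain b where b: "b \<in> coord_space r" "Y = coset (Ar r) W b"
    by (rule quot_Ar_cases[OF W])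
  show "contract V r (SOME a. a \<in> vadd (quot (Ar r) W) X Y) t
      = vadd V (contract V r (SOME a. a \<in> X) t) (contract V r (SOME a. a \<in> Y) t)"
    using a b by (simp add: quot_Ar_vadd[OF W] f contract_add_left[OF t]
        coord.subspace_add[OF subspace_coord_space])
qed

lemma lin_map_quot_eq_contract:
  assumes f: "lin_map (quot (Ar r) W) V f"
    and unit: "\<And>i x. i < r \<Longrightarrow> f (coset (Ar r) W (coord_scale x (unitv i))) = vsmult V x (t i)"
    and a: "a \<in> coord_space r"
  shows "f (coset (Ar r) W a) = contract V r a t"
proof -
  have f_zero: "f (coset (Ar r) W 0) = vzero V"
  proof -
    have "f (coset (Ar r) W 0) = f (vsmult (quot (Ar r) W) 0 (coset (Ar r) W 0))"
      using quot_Ar_vsmult[OF W, of 0 0] by (simp add: coord_space_def coord_scale_def zero_fun_def)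
    also have "\<dots> = vzero V"
      using f coset_Ar_in_quot[OF W, of 0] by (simp add: lin_map_def coord_space_def)
    finally show ?thesis .
  qed
  have "f (coset (Ar r) W (\<Sum>i<n. coord_scale (a i) (unitv i)))
      = vsum V (\<lambda>i. vsmult V (a i) (t i)) n" if "n \<le> r" for n
    using that
  proof (induct n)
    case 0
    then show ?case
      using f_zero by (simp add: zero_fun_def)
  next
    case (Suc n)
    let ?s = "\<Sum>i<n. coord_scale (a i) (unitv i)" and ?u = "coord_scale (a n) (unitv n)"
    have s: "?s \<in> coord_space r" and u: "?u \<in> coord_space r"
      using Suc.prems by (auto simp: coord_space_def unitv_def sum_fun_apply)
    have "f (coset (Ar r) W (\<Sum>i<Suc n. coord_scale (a i) (unitv i))) = f (coset (Ar r) W (?s + ?u))"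
      by (simp only: sum.lessThan_Suc)
    also have "\<dots> = vadd V (f (coset (Ar r) W ?s)) (f (coset (Ar r) W ?u))"
      using f coset_Ar_in_quot[OF W s] coset_Ar_in_quot[OF W u]
      by (simp add: lin_map_def quot_Ar_vadd[OF W s u, symmetric])
    also have "\<dots> = vsum V (\<lambda>i. vsmult V (a i) (t i)) (Suc n)"
      by (simp only: Suc.hyps[OF Suc_leD[OF Suc.prems]] unit[OF Suc_le_lessD[OF Suc.prems]] vsum.simps)
    finally show ?case .
  qed
  then have "f (coset (Ar r) W (\<Sum>i<r. coord_scale (a i) (unitv i))) = contract V r a t"
    by (simp add: contract_def)
  then show ?thesis
    using coord_space_sum_unitv[OF a] by metis
qed

end

end

section \<open>Representations of K_r and the shift functors\<close>

lemma kline_simps: "vcarrier kline = UNIV" "vzero kline = 0" "vadd kline = (+)" "vsmult kline = (*)"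
  by (simp_all add: kline_def)

lemma Cw_simps:
  "rep1 (Cw r W) = kline" "rep2 (Cw r W) = quot (Ar r) W"
  "rmap (Cw r W) i c = coset (Ar r) W (coord_scale c (unitv i))"
  by (simp_all add: Cw_def Ar_simps)

lemma sigma_simps:
  "rep1 (sigma r M) = (vpow r (rep1 M))\<lparr>vcarrier := {t \<in> vcarrier (vpow r (rep1 M)). psi r M t = vzero (rep2 M)}\<rparr>"
  "vcarrier (rep1 (sigma r M)) = {t \<in> vcarrier (vpow r (rep1 M)). psi r M t = vzero (rep2 M)}"
  "vzero (rep1 (sigma r M)) = (\<lambda>_. vzero (rep1 M))"
  "vadd (rep1 (sigma r M)) = (\<lambda>s t i. vadd (rep1 M) (s i) (t i))"
  "vsmult (rep1 (sigma r M)) = (\<lambda>a t i. vsmult (rep1 M) a (t i))"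
  "rep2 (sigma r M) = rep1 M" "rmap (sigma r M) i t = t i"
  by (simp_all add: sigma_def vpow_simps)

lemma sigma_inv_simps:
  "rep1 (sigma_inv r M) = rep2 M"
  "rep2 (sigma_inv r M) = quot (vpow r (rep2 M)) (phi r M ` vcarrier (rep1 M))"
  "rmap (sigma_inv r M) i y = coset (vpow r (rep2 M)) (phi r M ` vcarrier (rep1 M)) (incl (rep2 M) i y)"
  by (simp_all add: sigma_inv_def)

text \<open>Via f \<mapsto> f_1(1), ann_ker r M W is Hom(C(W), sigma(M)), see hom_zero_Cw_sigma_iff.\<close>
definition ann_ker :: "nat \<Rightarrow> ('k::field, 'v, 'w) krep \<Rightarrow> (nat \<Rightarrow> 'k) set \<Rightarrow> (nat \<Rightarrow> 'v) set" where
  "ann_ker r M W = {t \<in> vcarrier (vpow r (rep1 M)). psi r M t = vzero (rep2 M) \<and>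
     (\<forall>a\<in>W. contract (rep1 M) r a t = vzero (rep1 M))}"

locale kronecker_rep =
  fixes r :: nat and M :: "('k::field, 'v, 'w) krep"
  assumes is_rep: "is_rep r M"
begin

sublocale M1: vspace_laws "rep1 M"
  using is_rep by (simp add: is_rep_def fd_vs_vspace_laws)

sublocale M2: vspace_laws "rep2 M"
  using is_rep by (simp add: is_rep_def fd_vs_vspace_laws)

lemma rmap_closed: "i < r \<Longrightarrow> x \<in> vcarrier (rep1 M) \<Longrightarrow> rmap M i x \<in> vcarrier (rep2 M)"
  and rmap_vadd: "i < r \<Longrightarrow> x \<in> vcarrier (rep1 M) \<Longrightarrow> y \<in> vcarrier (rep1 M) \<Longrightarrow>
    rmap M i (vadd (rep1 M) x y) = vadd (rep2 M) (rmap M i x) (rmap M i y)"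
  and rmap_vsmult: "i < r \<Longrightarrow> x \<in> vcarrier (rep1 M) \<Longrightarrow>
    rmap M i (vsmult (rep1 M) a x) = vsmult (rep2 M) a (rmap M i x)"
  using is_rep by (auto simp: is_rep_def lin_map_def)

lemma rmap_vzero: "i < r \<Longrightarrow> rmap M i (vzero (rep1 M)) = vzero (rep2 M)"
  using is_rep lin_map_vzero[OF M1.vspace_laws_axioms M2.vspace_laws_axioms] by (simp add: is_rep_def)

lemma psi_vadd:
  assumes "s \<in> vcarrier (vpow r (rep1 M))" "t \<in> vcarrier (vpow r (rep1 M))"
  shows "psi r M (vadd (vpow r (rep1 M)) s t) = vadd (rep2 M) (psi r M s) (psi r M t)"
proof -
  have st: "\<And>i. s i \<in> vcarrier (rep1 M)" "\<And>i. t i \<in> vcarrier (rep1 M)"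
    using assms by (simp_all add: M1.vpow_mem)
  have "psi r M (vadd (vpow r (rep1 M)) s t)
      = vsum (rep2 M) (\<lambda>i. vadd (rep2 M) (rmap M i (s i)) (rmap M i (t i))) r"
    unfolding psi_def by (intro M2.vsum_cong) (simp add: vpow_simps rmap_vadd st)
  then show ?thesis
    by (simp add: psi_def M2.vsum_vadd rmap_closed st)
qed

lemma psi_vsmult:
  assumes "t \<in> vcarrier (vpow r (rep1 M))"
  shows "psi r M (vsmult (vpow r (rep1 M)) c t) = vsmult (rep2 M) c (psi r M t)"
proof -
  have t: "\<And>i. t i \<in> vcarrier (rep1 M)"
    using assms by (simp add: M1.vpow_mem)
  have "psi r M (vsmult (vpow r (rep1 M)) c t) = vsum (rep2 M) (\<lambda>i. vsmult (rep2 M) c (rmap M i (t i))) r"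
    unfolding psi_def by (intro M2.vsum_cong) (simp add: vpow_simps rmap_vsmult t)
  then show ?thesis
    by (simp add: psi_def M2.vsum_vsmult rmap_closed t)
qed

lemma psi_vzero: "psi r M (vzero (vpow r (rep1 M))) = vzero (rep2 M)"
  unfolding psi_def
  by (subst M2.vsum_vzero[symmetric]) (auto intro!: M2.vsum_cong simp: vpow_simps rmap_vzero)

lemma vspace_laws_sigma1: "vspace_laws (rep1 (sigma r M))"
proof -
  have "subspace_of (vpow r (rep1 M)) {t \<in> vcarrier (vpow r (rep1 M)). psi r M t = vzero (rep2 M)}"
    using vspace_laws.vadd_closed[OF M1.vspace_laws_vpow] vspace_laws.vsmult_closed[OF M1.vspace_laws_vpow]
    by (auto simp: subspace_of_def psi_vzero psi_vadd psi_vsmult vspace_laws.vzero_closed[OF M1.vspace_laws_vpow])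
  then show ?thesis
    unfolding sigma_simps(1) by (rule vspace_laws.vspace_laws_subspace[OF M1.vspace_laws_vpow])
qed

end

context kronecker_rep
begin

context
  fixes W :: "(nat \<Rightarrow> 'k) set"
  assumes W: "W \<subseteq> coord_space r" "coord.subspace W"
begin

lemma mor_Cw_sigma_of_ann_ker:
  assumes t: "t \<in> ann_ker r M W"
  shows "is_mor r (Cw r W) (sigma r M) (\<lambda>c i. vsmult (rep1 M) c (t i))
    (\<lambda>X. contract (rep1 M) r (SOME a. a \<in> X) t)"
proof -
  have tV: "t \<in> vcarrier (vpow r (rep1 M))" and psi: "psi r M t = vzero (rep2 M)"
    and ann: "\<forall>a\<in>W. contract (rep1 M) r a t = vzero (rep1 M)"
    using t by (auto simp: ann_ker_def)
  have ti: "t i \<in> vcarrier (rep1 M)" for i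
    using tV by (rule M1.vpow_mem)
  have "(\<lambda>i. vsmult (rep1 M) c (t i)) = vsmult (vpow r (rep1 M)) c t" for c
    by (simp add: vpow_simps)
  then have "(\<lambda>i. vsmult (rep1 M) c (t i)) \<in> vcarrier (rep1 (sigma r M))" for c
    using tV psi by (simp add: sigma_simps psi_vsmult vspace_laws.vsmult_closed[OF M1.vspace_laws_vpow])
  then have "lin_map (rep1 (Cw r W)) (rep1 (sigma r M)) (\<lambda>c i. vsmult (rep1 M) c (t i))"
    by (auto simp: lin_map_def Cw_simps kline_simps sigma_simps vpow_simps fun_eq_iff
        M1.vsmult_add_left M1.vsmult_vsmult ti)
  moreover have "contract (rep1 M) r (SOME a. a \<in> rmap (Cw r W) i x) t
      = rmap (sigma r M) i (\<lambda>j. vsmult (rep1 M) x (t j))" if "i < r" for i x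
  proof -
    have "coord_scale x (unitv i) \<in> coord_space r"
      using that by (intro coord.subspace_scale[OF subspace_coord_space] unitv_in_coord_space)
    then show ?thesis
      using that by (simp add: Cw_simps sigma_simps M1.contract_some_coset[OF W tV ann]
          M1.contract_scale_left[OF tV] M1.contract_unitv[OF tV])
  qed
  ultimately show ?thesis
    using M1.lin_map_quot_contract[OF W tV ann] by (simp add: is_mor_def Cw_simps sigma_simps(6))
qed

lemma ann_ker_of_mor_Cw_sigma:
  assumes mor: "is_mor r (Cw r W) (sigma r M) f1 f2"
  shows "f1 1 \<in> ann_ker r M W" and "f1 x = (\<lambda>i. vsmult (rep1 M) x (f1 1 i))"
    and "a \<in> coord_space r \<Longrightarrow> f2 (coset (Ar r) W a) = contract (rep1 M) r a (f1 1)"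
proof -
  have l1: "lin_map kline (rep1 (sigma r M)) f1"
    and l2: "lin_map (quot (Ar r) W) (rep1 M) f2"
    and comm: "\<And>i x. i < r \<Longrightarrow> f2 (coset (Ar r) W (coord_scale x (unitv i))) = f1 x i"
    using mor by (simp_all add: is_mor_def Cw_simps sigma_simps kline_simps)
  have tV: "f1 1 \<in> vcarrier (vpow r (rep1 M))" and psi: "psi r M (f1 1) = vzero (rep2 M)"
    using l1 by (simp_all add: lin_map_def kline_simps sigma_simps)
  show f1: "f1 x = (\<lambda>i. vsmult (rep1 M) x (f1 1 i))" for x
  proof -
    have "\<forall>c y. f1 (c * y) = vsmult (vpow r (rep1 M)) c (f1 y)"
      using l1 by (simp add: lin_map_def kline_simps sigma_simps)
    then have "f1 (x * 1) = vsmult (vpow r (rep1 M)) x (f1 1)"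
      by blast
    then show ?thesis
      by (simp add: vpow_simps)
  qed
  have "f2 (coset (Ar r) W (coord_scale x (unitv i))) = vsmult (rep1 M) x (f1 1 i)" if "i < r" for i x
    using comm[OF that, of x] f1[of x] by simp
  then show f2: "f2 (coset (Ar r) W a) = contract (rep1 M) r a (f1 1)" if "a \<in> coord_space r" for a
    using M1.lin_map_quot_eq_contract[OF W l2 _ that] by blast
  have "contract (rep1 M) r a (f1 1) = vzero (rep1 M)" if "a \<in> W" for a
    using that W f2[of a] f2[of 0] coset_Ar_eq_zero_iff[OF W, of a] M1.contract_zero_left[OF tV]
    by (auto simp: coord_space_def)
  then show "f1 1 \<in> ann_ker r M W"
    using tV psi by (simp add: ann_ker_def)
qed

lemma hom_zero_Cw_sigma_iff:
  "hom_zero r (Cw r W) (sigma r M) \<longleftrightarrow> ann_ker r M W \<subseteq> {vzero (vpow r (rep1 M))}"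
proof
  assume hom: "hom_zero r (Cw r W) (sigma r M)"
  show "ann_ker r M W \<subseteq> {vzero (vpow r (rep1 M))}"
  proof
    fix t assume t: "t \<in> ann_ker r M W"
    then have "(\<lambda>i. vsmult (rep1 M) 1 (t i)) = vzero (rep1 (sigma r M))"
      using hom mor_Cw_sigma_of_ann_ker[OF t] by (auto simp: hom_zero_def Cw_simps kline_simps)
    moreover have "t \<in> vcarrier (vpow r (rep1 M))"
      using t by (simp add: ann_ker_def)
    then have "t i \<in> vcarrier (rep1 M)" for i
      by (rule M1.vpow_mem)
    ultimately show "t \<in> {vzero (vpow r (rep1 M))}"
      by (simp add: sigma_simps vpow_simps)
  qed
next
  assume ann: "ann_ker r M W \<subseteq> {vzero (vpow r (rep1 M))}"
  show "hom_zero r (Cw r W) (sigma r M)"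
    unfolding hom_zero_def
  proof (intro allI impI conjI ballI)
    fix f1 f2 assume mor: "is_mor r (Cw r W) (sigma r M) f1 f2"
    have t0: "f1 1 = vzero (vpow r (rep1 M))"
      using ann ann_ker_of_mor_Cw_sigma(1)[OF mor] by blast
    show "f1 x = vzero (rep1 (sigma r M))" for x
      using ann_ker_of_mor_Cw_sigma(2)[OF mor, of x] t0 by (simp add: sigma_simps vpow_simps)
    show "f2 y = vzero (rep2 (sigma r M))" if "y \<in> vcarrier (rep2 (Cw r W))" for y
      using that ann_ker_of_mor_Cw_sigma(3)[OF mor] t0
      by (auto simp: Cw_simps sigma_simps M1.contract_vzero_right elim: quot_Ar_cases[OF W])
  qed
qed

end

end

lemma ball_grass_perp:
  fixes P :: "(nat \<Rightarrow> 'k::field) set \<Rightarrow> bool"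
  assumes "d \<le> r"
  shows "(\<forall>v\<in>grass r d. P (perp r v)) \<longleftrightarrow> (\<forall>W\<in>grass r (r - d). P W)"
proof
  assume P: "\<forall>v\<in>grass r d. P (perp r v)"
  show "\<forall>W\<in>grass r (r - d). P W"
  proof
    fix W :: "(nat \<Rightarrow> 'k) set" assume W: "W \<in> grass r (r - d)"
    then have "perp r W \<in> grass r d"
      using perp_in_grass[OF W] assms by simp
    then show "P W"
      using P perp_perp[OF W] by fastforce
  qed
qed (use perp_in_grass in blast)

lemma grass_one_cases:
  assumes "U \<in> grass r 1"
  obtains b where "b \<in> coord_space r" "b \<noteq> 0" "U = coord.span {b}"
proof -
  obtain B where B: "card B = 1" "coord.independent B" "coord.span B = U" "U \<subseteq> coord_space r"
    using assms by (auto simp: grass_def)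
  then obtain b where "B = {b}"
    by (auto simp: card_1_singleton_iff)
  then show ?thesis
    using B coord.span_base[of b "{b}"] by (intro that) auto
qed

context kronecker_rep
begin

lemma tens_eq_annihilated:
  assumes "v \<in> grass r d"
  shows "tens r v M = {t \<in> vcarrier (vpow r (rep1 M)). \<forall>a\<in>perp r v. contract (rep1 M) r a t = vzero (rep1 M)}"
  unfolding tens_eq_tensor_span by (rule M1.tensor_span_eq_annihilated[OF assms])

theorem rep_proj_iff_ann_ker:
  assumes "d \<le> r"
  shows "rep_proj r d M \<longleftrightarrow> (\<forall>W\<in>grass r (r - d). ann_ker r M W \<subseteq> {vzero (vpow r (rep1 M))})"
proof -
  have "(\<forall>t\<in>tens r v M. psi r M t = vzero (rep2 M) \<longrightarrow> t = vzero (vpow r (rep1 M)))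
      \<longleftrightarrow> ann_ker r M (perp r v) \<subseteq> {vzero (vpow r (rep1 M))}" if "v \<in> grass r d" for v
    by (auto simp: tens_eq_annihilated[OF that] ann_ker_def)
  then have "rep_proj r d M \<longleftrightarrow> (\<forall>v\<in>grass r d. ann_ker r M (perp r v) \<subseteq> {vzero (vpow r (rep1 M))})"
    by (simp add: rep_proj_def Gr_Ar)
  then show ?thesis
    using ball_grass_perp[OF assms] by simp
qed

lemma ann_ker_line:
  assumes "b \<in> coord_space r"
  shows "ann_ker r M (coord.span {b})
    = {t \<in> vcarrier (vpow r (rep1 M)). psi r M t = vzero (rep2 M) \<and> contract (rep1 M) r b t = vzero (rep1 M)}"
  using coord.span_base[of b "{b}"]
  by (auto simp: ann_ker_def coord.span_singleton M1.contract_scale_left)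
     (metis M1.contract_closed M1.vsmult_one)

lemma tens_sigma_line:
  assumes "b \<in> coord_space r"
  shows "tens r (coord.span {b}) (sigma r M)
    = {(\<lambda>i j. vsmult (rep1 M) (b i) (t j)) | t. t \<in> vcarrier (rep1 (sigma r M))}"
proof
  show "tens r (coord.span {b}) (sigma r M) \<subseteq> {(\<lambda>i j. vsmult (rep1 M) (b i) (t j)) | t. t \<in> vcarrier (rep1 (sigma r M))}"
    using vspace_laws.tensor_span_line[OF vspace_laws_sigma1]
    by (fastforce simp: tens_eq_tensor_span sigma_simps(5))
  show "{(\<lambda>i j. vsmult (rep1 M) (b i) (t j)) | t. t \<in> vcarrier (rep1 (sigma r M))} \<subseteq> tens r (coord.span {b}) (sigma r M)"
    unfolding tens_def
    by (force simp: sigma_simps(5) intro: vspan.span_gen coord.span_base)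
qed

lemma psi_sigma_pure:
  "psi r (sigma r M) (\<lambda>i j. vsmult (rep1 M) (b i) (t j)) = contract (rep1 M) r b t"
  by (simp add: psi_def contract_def sigma_simps)

theorem rep_proj_pred_iff_EKP_sigma:
  assumes "1 \<le> r"
  shows "rep_proj r (r - 1) M \<longleftrightarrow> EKP r (sigma r M)"
proof -
  have "(\<forall>s\<in>tens r U (sigma r M). psi r (sigma r M) s = vzero (rep2 (sigma r M)) \<longrightarrow>
      s = vzero (vpow r (rep1 (sigma r M)))) \<longleftrightarrow> ann_ker r M U \<subseteq> {vzero (vpow r (rep1 M))}"
    if U: "U \<in> grass r 1" for U
  proof -
    obtain b where b: "b \<in> coord_space r" "b \<noteq> 0" "U = coord.span {b}"
      using grass_one_cases[OF U] .
    obtain i where "b i \<noteq> 0"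
      using b(2) by (auto simp: fun_eq_iff)
    then have zero_iff: "(\<lambda>i j. vsmult (rep1 M) (b i) (t j)) = vzero (vpow r (rep1 (sigma r M)))
        \<longleftrightarrow> t = vzero (vpow r (rep1 M))" if "t \<in> vcarrier (vpow r (rep1 M))" for t
      using M1.vsmult_eq_vzero_imp M1.vpow_mem[OF that] by (auto simp: fun_eq_iff vpow_simps sigma_simps(3))
    have "(\<forall>s\<in>tens r U (sigma r M). psi r (sigma r M) s = vzero (rep2 (sigma r M)) \<longrightarrow>
        s = vzero (vpow r (rep1 (sigma r M))))
      \<longleftrightarrow> (\<forall>t\<in>vcarrier (rep1 (sigma r M)). contract (rep1 M) r b t = vzero (rep1 M) \<longrightarrow>
        t = vzero (vpow r (rep1 M)))"
      by (auto simp: b(3) tens_sigma_line[OF b(1)] psi_sigma_pure zero_iff sigma_simps(2,6))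
    also have "\<dots> \<longleftrightarrow> ann_ker r M U \<subseteq> {vzero (vpow r (rep1 M))}"
      by (auto simp: b(3) ann_ker_line[OF b(1)] sigma_simps(2))
    finally show ?thesis .
  qed
  then have "EKP r (sigma r M) \<longleftrightarrow> (\<forall>U\<in>grass r 1. ann_ker r M U \<subseteq> {vzero (vpow r (rep1 M))})"
    unfolding EKP_def rep_proj_def Gr_Ar by simp
  then show ?thesis
    using rep_proj_iff_ann_ker[of "r - 1"] assms by simp
qed

end

context kronecker_rep
begin

lemma phi_closed: "m \<in> vcarrier (rep1 M) \<Longrightarrow> phi r M m \<in> vcarrier (vpow r (rep2 M))"
  by (auto simp: phi_def vpow_simps rmap_closed)

lemma phi_vzero: "phi r M (vzero (rep1 M)) = vzero (vpow r (rep2 M))"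
  by (auto simp: phi_def vpow_simps fun_eq_iff rmap_vzero)

lemma subspace_phi_image: "subspace_of (vpow r (rep2 M)) (phi r M ` vcarrier (rep1 M))"
  unfolding subspace_of_def
proof (intro conjI ballI allI)
  show "phi r M ` vcarrier (rep1 M) \<subseteq> vcarrier (vpow r (rep2 M))"
    using phi_closed by blast
  show "vzero (vpow r (rep2 M)) \<in> phi r M ` vcarrier (rep1 M)"
    using phi_vzero[symmetric] M1.vzero_closed by (rule image_eqI)
next
  fix x y assume "x \<in> phi r M ` vcarrier (rep1 M)" "y \<in> phi r M ` vcarrier (rep1 M)"
  then obtain m m' where m: "m \<in> vcarrier (rep1 M)" "x = phi r M m"
    and m': "m' \<in> vcarrier (rep1 M)" "y = phi r M m'"
    by auto
  then have "vadd (vpow r (rep2 M)) x y = phi r M (vadd (rep1 M) m m')"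
    by (auto simp: vpow_simps phi_def fun_eq_iff rmap_vadd)
  then show "vadd (vpow r (rep2 M)) x y \<in> phi r M ` vcarrier (rep1 M)"
    using m m' by auto
next
  fix a x assume "x \<in> phi r M ` vcarrier (rep1 M)"
  then obtain m where m: "m \<in> vcarrier (rep1 M)" "x = phi r M m"
    by auto
  then have "vsmult (vpow r (rep2 M)) a x = phi r M (vsmult (rep1 M) a m)"
    by (auto simp: vpow_simps phi_def fun_eq_iff rmap_vsmult)
  then show "vsmult (vpow r (rep2 M)) a x \<in> phi r M ` vcarrier (rep1 M)"
    using m by auto
qed

lemma psi_sigma_inv:
  assumes t: "t \<in> vcarrier (vpow r (rep2 M))"
  shows "psi r (sigma_inv r M) t = coset (vpow r (rep2 M)) (phi r M ` vcarrier (rep1 M)) t"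
proof -
  let ?V = "vpow r (rep2 M)" and ?P = "phi r M ` vcarrier (rep1 M)"
  let ?t = "\<lambda>n j. if j < n then t j else vzero (rep2 M)"
  have ti: "t i \<in> vcarrier (rep2 M)" for i
    using t by (rule M2.vpow_mem)
  have "vsum (quot ?V ?P) (\<lambda>i. coset ?V ?P (incl (rep2 M) i (t i))) n = coset ?V ?P (?t n)"
    if "n \<le> r" for n
    using that
  proof (induct n)
    case 0
    then show ?case
      by (simp add: quot_simps vpow_simps)
  next
    case (Suc n)
    have "?t n \<in> vcarrier ?V" "incl (rep2 M) n (t n) \<in> vcarrier ?V"
      using Suc.prems ti by (auto simp: vpow_simps incl_def)
    moreover have "vadd ?V (?t n) (incl (rep2 M) n (t n)) = ?t (Suc n)"
      using ti by (auto simp: vpow_simps incl_def fun_eq_iff)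
    ultimately show ?case
      using Suc vspace_laws.quot_vadd_coset[OF M2.vspace_laws_vpow subspace_phi_image] by simp
  qed
  moreover have "?t r = t"
    using t by (auto simp: vpow_simps fun_eq_iff)
  ultimately show ?thesis
    by (simp add: psi_def sigma_inv_simps)
qed

lemma contract_phi:
  "m \<in> vcarrier (rep1 M) \<Longrightarrow> contract (rep2 M) r a (phi r M m) = psi r M (\<lambda>i. vsmult (rep1 M) (a i) m)"
  unfolding contract_def psi_def by (intro M2.vsum_cong) (simp add: phi_def rmap_vsmult)

theorem rep_proj_sigma_inv:
  assumes proj: "rep_proj r d M" and d: "1 \<le> d" "d \<le> r" and e: "e < r"
  shows "rep_proj r e (sigma_inv r M)"
  unfolding rep_proj_def Gr_Ar
proof (intro ballI impI)
  let ?V = "vpow r (rep2 M)" and ?P = "phi r M ` vcarrier (rep1 M)"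
  fix U t assume U: "U \<in> grass r e" and t: "t \<in> tens r U (sigma_inv r M)"
    and psi_t: "psi r (sigma_inv r M) t = vzero (rep2 (sigma_inv r M))"
  obtain B where B: "finite B" "card B = e" "coord.span B = U"
    using U by (auto simp: grass_def)
  then obtain a where a: "a \<in> perp r U" "a \<noteq> 0"
    using exists_nonzero_perp[OF B(1)] e perp_span[of r B] by auto
  have "t \<in> tensor_span r U (rep2 M)"
    using t by (simp add: tens_eq_tensor_span sigma_inv_simps)
  moreover have "\<forall>b\<in>U. dot r a b = 0"
    using a(1) by (simp add: perp_def)
  ultimately have "t \<in> vcarrier ?V \<and> contract (rep2 M) r a t = vzero (rep2 M)"
    using M2.tensor_span_annihilated[OF grass_subset[OF U]] by blast
  moreover from this have "coset ?V ?P t = coset ?V ?P (vzero ?V)"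
    using psi_t psi_sigma_inv by (simp add: sigma_inv_simps quot_simps)
  ultimately obtain m where m: "m \<in> vcarrier (rep1 M)" "t = phi r M m"
    and psi_am: "psi r M (\<lambda>i. vsmult (rep1 M) (a i) m) = vzero (rep2 M)"
    using vspace_laws.coset_eq_coset_vzero_iff[OF M2.vspace_laws_vpow subspace_phi_image]
    by (auto simp: contract_phi)
  obtain U' where U': "U' \<in> grass r d" "a \<in> U'"
    using exists_grass_containing[OF _ a(2) d] a(1) perp_subset by blast
  have "(\<lambda>i. vsmult (rep1 M) (a i) m) \<in> tens r U' M"
    unfolding tens_def by (rule vspan.span_gen) (use U' m in auto)
  then have "(\<lambda>i. vsmult (rep1 M) (a i) m) = vzero (vpow r (rep1 M))"
    using proj U' psi_am by (auto simp: rep_proj_def Gr_Ar)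
  moreover obtain i where "a i \<noteq> 0"
    using a(2) by (auto simp: fun_eq_iff)
  ultimately have "m = vzero (rep1 M)"
    using M1.vsmult_eq_vzero_imp m(1) by (auto simp: vpow_simps fun_eq_iff)
  then show "t = vzero (vpow r (rep1 (sigma_inv r M)))"
    using m(2) phi_vzero by (simp add: sigma_inv_simps)
qed

end

theorem theorem2p2p3:
  fixes r d :: nat and M :: "('k::field, 'v, 'w) krep"
  assumes "alg_closed TYPE('k)"
    and "2 \<le> r" and "1 \<le> d" and "d < r"
    and "is_rep r M"
  shows "(rep_proj r d M \<longleftrightarrow> (\<forall>W\<in>Gr (Ar r) (r - d). hom_zero r (Cw r W) (sigma r M)))
       \<and> (rep_proj r (r - 1) M \<longleftrightarrow> EKP r (sigma r M))
       \<and> (rep_proj r d M \<longrightarrow> rep_proj r (r - 1) (sigma_inv r M) \<and> rep_proj r d (sigma_inv r M))"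
proof -
  interpret kronecker_rep r M
    by (rule kronecker_rep.intro) fact
  have "d \<le> r"
    using \<open>d < r\<close> by simp
  have "rep_proj r d M \<longleftrightarrow> (\<forall>W\<in>Gr (Ar r) (r - d). hom_zero r (Cw r W) (sigma r M))"
    using rep_proj_iff_ann_ker[OF \<open>d \<le> r\<close>] hom_zero_Cw_sigma_iff[OF grass_subset grass_subspace]
    by (simp add: Gr_Ar)
  moreover have "rep_proj r (r - 1) M \<longleftrightarrow> EKP r (sigma r M)"
    using rep_proj_pred_iff_EKP_sigma \<open>2 \<le> r\<close> by simp
  moreover have "rep_proj r d M \<Longrightarrow> rep_proj r e (sigma_inv r M)" if "e < r" for e
    using rep_proj_sigma_inv \<open>1 \<le> d\<close> \<open>d \<le> r\<close> that by blast
  ultimately show ?thesis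
    using \<open>2 \<le> r\<close> \<open>d < r\<close> by simp
qed

end
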